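(* Let $(\omega,c)\in\mathbb{R}^2$ satisfy: $\omega>c^2/4$, or $\omega=c^2/4$ and $c>0$. Let $$\alpha_0=\tfrac13\bigl(4c+\sqrt{48\omega+4c^2}\bigr),\qquad A(x)=-3x^2+8cx+64\omega,\qquad L_0=L_0(\omega,c)=\frac{2\pi}{\sqrt{\alpha_0\sqrt{A(\alpha_0)}}}.$$ Assume $L_0<L<\infty$. Then there exists a positive single-bump solution $\Phi^L_{\omega,c}$ of $$-\Phi''+\Bigl(\omega-\frac{c^2}{4}\Bigr)\Phi+\frac c2|\Phi|^2\Phi-\frac3{16}|\Phi|^4\Phi=0,\qquad x\in\mathbb{T}_{2L},$$ such that $\Phi^L_{\omega,c}(x)\to\Phi_{\omega,c}(x)$ for every $x\in\mathbb{R}$ as $L\to\infty$. Moreover $\Phi^L_{\omega,c}$ is explicitly given by $$\bigl(\Phi^L_{\omega,c}(x)\bigr)^2=\eta_3\,\frac{\mathrm{dn}^2\!\left(\frac{x}{2g};k\right)}{1+\beta^2\,\mathrm{sn}^2\!\left(\frac{x}{2g};k\right)},\qquad x\in[-L,L],$$ for some parameters $\eta_3>0$, $g>0$, $k\in(0,1)$, $\beta\in\mathbb{R}$ depending on $(L,\omega,c)$.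
   Context: $\mathbb{T}_{2L}=\mathbb{R}/2L\mathbb{Z}\simeq[-L,L]$ is the torus of length $2L$. $\Phi_{\omega,c}$ is the positive even function on $\mathbb{R}$ given by $\Phi_{\omega,c}^2(x)=\dfrac{4\omega-c^2}{\sqrt{\omega}\bigl(\cosh(\sqrt{4\omega-c^2}\,x)-\frac{c}{2\sqrt\omega}\bigr)}$ if $\omega>c^2/4$, and $\Phi_{\omega,c}^2(x)=\dfrac{4c}{(cx)^2+1}$ if $\omega=c^2/4$, $c>0$ (the soliton profile on the whole line). A positive single-bump solution on $\mathbb{T}_{2L}$ means a positive $2L$-periodic solution which (up to translation) attains its maximum at $x=0$, is even, and is strictly decreasing on $(0,L)$, attaining its minimum at $x=L$ (one bump per period). $\mathrm{sn}(\cdot;k)$, $\mathrm{dn}(\cdot;k)$ are the Jacobi elliptic functions with modulus $k$: if $u=\int_0^\varphi(1-k^2\sin^2\theta)^{-1/2}d\theta$ then $\mathrm{sn}(u;k)=\sin\varphi$, $\mathrm{dn}(u;k)=\sqrt{1-k^2\mathrm{sn}^2(u;k)}$. The quantity $A(\alpha_0)$ is positive under the hypothesis on $(\omega,c)$. *)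

theory Defs
  imports "HOL-Analysis.Analysis"
begin

definition ellF :: "real \<Rightarrow> real \<Rightarrow> real" where
  "ellF phi k =
     (if 0 \<le> phi then integral {0..phi} (\<lambda>\<theta>. 1 / sqrt (1 - k\<^sup>2 * (sin \<theta>)\<^sup>2))
      else - integral {phi..0} (\<lambda>\<theta>. 1 / sqrt (1 - k\<^sup>2 * (sin \<theta>)\<^sup>2)))"

definition jacobi_am :: "real \<Rightarrow> real \<Rightarrow> real" where
  "jacobi_am u k = (THE phi. ellF phi k = u)"

definition jacobi_sn :: "real \<Rightarrow> real \<Rightarrow> real" where
  "jacobi_sn u k = sin (jacobi_am u k)"

definition jacobi_dn :: "real \<Rightarrow> real \<Rightarrow> real" where
  "jacobi_dn u k = sqrt (1 - k\<^sup>2 * (jacobi_sn u k)\<^sup>2)"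

definition soliton :: "real \<Rightarrow> real \<Rightarrow> real \<Rightarrow> real" where
  "soliton \<omega> c x =
     (if \<omega> > c\<^sup>2 / 4 then
        sqrt ((4 * \<omega> - c\<^sup>2) /
              (sqrt \<omega> * (cosh (sqrt (4 * \<omega> - c\<^sup>2) * x) - c / (2 * sqrt \<omega>))))
      else sqrt (4 * c / ((c * x)\<^sup>2 + 1)))"

definition alpha0 :: "real \<Rightarrow> real \<Rightarrow> real" where
  "alpha0 \<omega> c = (4 * c + sqrt (48 * \<omega> + 4 * c\<^sup>2)) / 3"

definition Apoly :: "real \<Rightarrow> real \<Rightarrow> real \<Rightarrow> real" where
  "Apoly \<omega> c x = - 3 * x\<^sup>2 + 8 * c * x + 64 * \<omega>"

definition L0 :: "real \<Rightarrow> real \<Rightarrow> real" where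
  "L0 \<omega> c = 2 * pi / sqrt (alpha0 \<omega> c * sqrt (Apoly \<omega> c (alpha0 \<omega> c)))"

definition solves_ode :: "real \<Rightarrow> real \<Rightarrow> (real \<Rightarrow> real) \<Rightarrow> bool" where
  "solves_ode \<omega> c \<Phi> \<longleftrightarrow>
     (\<exists>\<Phi>1 \<Phi>2. \<forall>x. (\<Phi> has_real_derivative \<Phi>1 x) (at x) \<and>
                    (\<Phi>1 has_real_derivative \<Phi>2 x) (at x) \<and>
                    - \<Phi>2 x + (\<omega> - c\<^sup>2 / 4) * \<Phi> x + c / 2 * \<bar>\<Phi> x\<bar>^2 * \<Phi> x
                      - 3 / 16 * \<bar>\<Phi> x\<bar>^4 * \<Phi> x = 0)"

text \<open>Positive single-bump solution on the torus T_{2L} (normalised so that the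
  maximum is at 0): positive, 2L-periodic, even, maximum at 0, strictly decreasing
  on [0,L], minimum at L.\<close>
definition single_bump_solution :: "real \<Rightarrow> real \<Rightarrow> real \<Rightarrow> (real \<Rightarrow> real) \<Rightarrow> bool" where
  "single_bump_solution \<omega> c L \<Phi> \<longleftrightarrow>
     solves_ode \<omega> c \<Phi> \<and>
     (\<forall>x. 0 < \<Phi> x) \<and>
     (\<forall>x. \<Phi> (x + 2 * L) = \<Phi> x) \<and>
     (\<forall>x. \<Phi> (- x) = \<Phi> x) \<and>
     (\<forall>x. \<Phi> x \<le> \<Phi> 0 \<and> \<Phi> L \<le> \<Phi> x) \<and>
     (\<forall>x y. 0 \<le> x \<and> x < y \<and> y \<le> L \<longrightarrow> \<Phi> y < \<Phi> x)"

end

theory Submission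
  imports Defs
begin

text \<open>The ansatz \<open>\<Phi>\<^sup>2 = \<eta>\<^sub>3 dn\<^sup>2 / (1 + \<beta>\<^sup>2 sn\<^sup>2)\<close>, written in the amplitude
  \<open>\<theta> = am(x/2g; k)\<close>, turns the ODE into a quadratic polynomial identity in \<open>sin\<^sup>2 \<theta>\<close>, i.e. into
  three algebraic equations for \<open>(\<eta>\<^sub>3, k, \<beta>, g)\<close>.  They are solved explicitly in terms of the
  roots \<open>\<eta>\<^sub>1 < 0 < p \<le> \<eta>\<^sub>3\<close> of the first integral of the ODE, with \<open>p \<in> (0, \<alpha>\<^sub>0)\<close> as free
  parameter; the resulting profile is even, \<open>2L\<close>-periodic with \<open>L = 2 g K(k)\<close> and strictly
  decreasing on \<open>[0, L]\<close>.  The half period depends continuously on \<open>p\<close>, equals \<open>L\<^sub>0\<close> at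
  \<open>p = \<alpha>\<^sub>0\<close> (where \<open>k = 0\<close>) and tends to \<open>\<infinity>\<close> as \<open>p \<rightarrow> 0\<close>, so every \<open>L > L\<^sub>0\<close> is attained,
  and \<open>p(L) \<rightarrow> 0\<close> as \<open>L \<rightarrow> \<infinity>\<close>.  As \<open>p \<rightarrow> 0\<close> either \<open>k \<rightarrow> 1\<close> and the amplitude tends to the
  Gudermannian function (case \<open>\<omega> > c\<^sup>2/4\<close>), or \<open>g \<rightarrow> \<infinity>\<close> and \<open>sin\<^sup>2 \<theta> \<sim> (x/2g)\<^sup>2\<close>
  (case \<open>\<omega> = c\<^sup>2/4\<close>); in both cases the profile converges pointwise to the soliton.\<close>

section \<open>The incomplete elliptic integral and the Jacobi amplitude\<close>

definition Delta :: "real \<Rightarrow> real \<Rightarrow> real" where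
  "Delta k \<theta> = sqrt (1 - k\<^sup>2 * (sin \<theta>)\<^sup>2)"

lemma jacobi_dn_eq_Delta: "jacobi_dn u k = Delta k (jacobi_am u k)"
  unfolding jacobi_dn_def jacobi_sn_def Delta_def ..

lemma sin_sq_less_1: "\<bar>\<theta>\<bar> < pi/2 \<Longrightarrow> (sin \<theta>)\<^sup>2 < 1"
  using cos_gt_zero_pi[of \<theta>] sin_cos_squared_add[of \<theta>] by (smt (verit) zero_less_power)

lemma modulus_sin_sq_less_1:
  assumes "k\<^sup>2 < 1 \<or> (k\<^sup>2 \<le> 1 \<and> \<bar>\<theta>\<bar> < pi/2)"
  shows "k\<^sup>2 * (sin \<theta>)\<^sup>2 < 1"
proof -
  have "(sin \<theta>)\<^sup>2 \<le> 1" by (simp add: abs_square_le_1)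
  moreover have "k\<^sup>2 \<le> 1 \<and> (sin \<theta>)\<^sup>2 < 1 \<or> k\<^sup>2 < 1" using assms sin_sq_less_1 by auto
  ultimately show ?thesis by (smt (verit) mult_left_le_one_le mult_right_le_one_le zero_le_power2)
qed

lemma Delta_pos_iff: "Delta k \<theta> > 0 \<longleftrightarrow> k\<^sup>2 * (sin \<theta>)\<^sup>2 < 1"
  unfolding Delta_def by simp

lemma Delta_sq: "k\<^sup>2 * (sin \<theta>)\<^sup>2 < 1 \<Longrightarrow> (Delta k \<theta>)\<^sup>2 = 1 - k\<^sup>2 * (sin \<theta>)\<^sup>2"
  unfolding Delta_def by simp

lemma Delta_le_1: "k\<^sup>2 * (sin \<theta>)\<^sup>2 < 1 \<Longrightarrow> Delta k \<theta> \<le> 1"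
  unfolding Delta_def by simp

lemma Delta_minus [simp]: "Delta k (- \<theta>) = Delta k \<theta>"
  unfolding Delta_def by simp

lemma Delta_add_pi [simp]: "Delta k (\<theta> + pi) = Delta k \<theta>"
  unfolding Delta_def by simp

lemma continuous_on_inverse_Delta:
  "\<forall>\<theta>\<in>S. k\<^sup>2 * (sin \<theta>)\<^sup>2 < 1 \<Longrightarrow> continuous_on S (\<lambda>\<theta>. 1 / Delta k \<theta>)"
  unfolding Delta_def by (intro continuous_intros) auto

lemma ellF_eq_integral_diff:
  assumes "continuous_on {-M..M} (\<lambda>\<theta>. 1 / Delta k \<theta>)" and "\<bar>\<phi>\<bar> \<le> M"
  shows "ellF \<phi> k = integral {-M..\<phi>} (\<lambda>\<theta>. 1 / Delta k \<theta>) - integral {-M..0} (\<lambda>\<theta>. 1 / Delta k \<theta>)"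
proof -
  let ?f = "\<lambda>\<theta>. 1 / Delta k \<theta>"
  have int: "?f integrable_on {-M..b}" if "b \<le> M" for b
    using that by (intro integrable_continuous_real continuous_on_subset[OF assms(1)]) auto
  show ?thesis
  proof (cases "0 \<le> \<phi>")
    case True
    have "integral {-M..0} ?f + integral {0..\<phi>} ?f = integral {-M..\<phi>} ?f"
      using True assms(2) Henstock_Kurzweil_Integration.integral_combine[OF _ _ int[of \<phi>], of 0] by auto
    then show ?thesis using True unfolding ellF_def Delta_def by simp
  next
    case False
    have "integral {-M..\<phi>} ?f + integral {\<phi>..0} ?f = integral {-M..0} ?f"
      using False assms(2) Henstock_Kurzweil_Integration.integral_combine[OF _ _ int[of 0], of \<phi>] by auto
    then show ?thesis using False unfolding ellF_def Delta_def by simp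
  qed
qed

lemma ellF_has_real_derivative:
  assumes "k\<^sup>2 < 1 \<or> (k\<^sup>2 \<le> 1 \<and> \<bar>\<phi>\<bar> < pi/2)"
  shows "((\<lambda>\<phi>. ellF \<phi> k) has_real_derivative 1 / Delta k \<phi>) (at \<phi>)"
proof -
  let ?f = "\<lambda>\<theta>. 1 / Delta k \<theta>"
  obtain M where M: "\<bar>\<phi>\<bar> < M" "continuous_on {-M..M} ?f"
  proof (cases "k\<^sup>2 < 1")
    case True
    then show thesis
      by (intro that[of "\<bar>\<phi>\<bar> + 1"] continuous_on_inverse_Delta) (auto intro: modulus_sin_sq_less_1)
  next
    case False
    with assms have "k\<^sup>2 \<le> 1" "\<bar>\<phi>\<bar> < pi/2" by auto
    then show thesis
      by (intro that[of "\<bar>\<phi>\<bar>/2 + pi/4"] continuous_on_inverse_Delta)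
         (auto intro!: modulus_sin_sq_less_1)
  qed
  have "((\<lambda>x. integral {-M..x} ?f) has_real_derivative ?f \<phi>) (at \<phi> within {-M<..<M})"
    using M by (intro has_field_derivative_subset[OF integral_has_real_derivative]) auto
  then have "((\<lambda>x. integral {-M..x} ?f - integral {-M..0} ?f) has_real_derivative ?f \<phi>) (at \<phi>)"
    using M(1) by (subst (asm) at_within_open) (auto intro!: derivative_eq_intros)
  then show ?thesis
    by (rule has_field_derivative_transform_within_open[of _ _ _ "{-M<..<M}"])
       (use M in \<open>auto intro!: ellF_eq_integral_diff[symmetric]\<close>)
qed

lemma ellF_0 [simp]: "ellF 0 k = 0"
  unfolding ellF_def by simp

lemma ellF_1_strict_mono:
  assumes "0 \<le> a" "a < b" "b < pi/2"
  shows "ellF a 1 < ellF b 1"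
proof (rule DERIV_pos_imp_increasing[where f="\<lambda>\<phi>. ellF \<phi> 1", OF assms(2)])
  fix x assume "a \<le> x" "x \<le> b"
  then have "\<bar>x\<bar> < pi/2" using assms by auto
  then show "\<exists>y. ((\<lambda>\<phi>. ellF \<phi> 1) has_real_derivative y) (at x) \<and> 0 < y"
    using ellF_has_real_derivative[of 1 x] modulus_sin_sq_less_1[of 1 x]
    by (auto simp: Delta_pos_iff)
qed

lemma ellF_1_eq_artanh_sin:
  assumes "\<bar>\<phi>\<bar> < pi/2"
  shows "ellF \<phi> 1 = artanh (sin \<phi>)"
proof -
  let ?I = "{-(pi/2)<..<pi/2}"
  have "((\<lambda>\<phi>. ellF \<phi> 1 - artanh (sin \<phi>)) has_real_derivative 0) (at x within ?I)"
    if "x \<in> ?I" for x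
  proof -
    have x: "\<bar>x\<bar> < pi/2" using that by auto
    have "\<bar>sin x\<bar> < 1" using sin_sq_less_1[OF x] by (simp add: abs_square_less_1)
    then have "((\<lambda>\<phi>. artanh (sin \<phi>)) has_real_derivative 1 / (1 - (sin x)\<^sup>2) * cos x) (at x)"
      by (intro DERIV_chain2[OF artanh_real_has_field_derivative] DERIV_sin) auto
    then have "((\<lambda>\<phi>. ellF \<phi> 1 - artanh (sin \<phi>)) has_real_derivative
        1 / Delta 1 x - 1 / (1 - (sin x)\<^sup>2) * cos x) (at x)"
      using x by (intro DERIV_diff ellF_has_real_derivative) auto
    moreover have "cos x > 0" using x by (intro cos_gt_zero_pi) auto
    then have "Delta 1 x = cos x" "1 - (sin x)\<^sup>2 = (cos x)\<^sup>2"
      by (simp_all add: Delta_def sin_squared_eq)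
    then have "1 / Delta 1 x - 1 / (1 - (sin x)\<^sup>2) * cos x = 0"
      by (simp add: power2_eq_square)
    ultimately show ?thesis by (auto intro: has_field_derivative_at_within)
  qed
  then obtain C where "\<forall>x\<in>?I. ellF x 1 - artanh (sin x) = C"
    using has_field_derivative_zero_constant[of ?I] by blast
  moreover have "\<phi> \<in> ?I" "0 \<in> ?I" using assms pi_gt_zero
    unfolding greaterThanLessThan_iff by linarith+
  ultimately have "ellF \<phi> 1 - artanh (sin \<phi>) = ellF 0 1 - artanh (sin 0)" by metis
  then show ?thesis by simp
qed

lemma ellF_1_arcsin_tanh: "ellF (arcsin (tanh t)) 1 = t"
proof -
  have b: "-1 < tanh t" "tanh t < 1" using tanh_real_bounds[of t] by auto
  then have "\<bar>arcsin (tanh t)\<bar> < pi/2" using arcsin_lt_bounded[OF b] by auto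
  then show ?thesis using ellF_1_eq_artanh_sin b by (simp add: artanh_tanh_real)
qed

definition ellK :: "real \<Rightarrow> real" where
  "ellK k = ellF (pi/2) k"

context
  fixes k :: real
  assumes k2: "k\<^sup>2 < 1"
begin

lemma DERIV_ellF: "((\<lambda>\<phi>. ellF \<phi> k) has_real_derivative 1 / Delta k \<phi>) (at \<phi>)"
  using ellF_has_real_derivative k2 by auto

lemma Delta_pos: "Delta k \<theta> > 0"
  using modulus_sin_sq_less_1 k2 by (auto simp: Delta_pos_iff)

lemma isCont_ellF: "isCont (\<lambda>\<phi>. ellF \<phi> k) \<phi>"
  using DERIV_ellF DERIV_isCont by blast

lemma strict_mono_ellF: "strict_mono (\<lambda>\<phi>. ellF \<phi> k)"
  by (intro strict_monoI DERIV_pos_imp_increasing[where f="\<lambda>\<phi>. ellF \<phi> k"])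
     (use DERIV_ellF Delta_pos in \<open>auto intro!: exI\<close>)

lemma ellF_less_iff: "ellF a k < ellF b k \<longleftrightarrow> a < b"
  using strict_mono_less[OF strict_mono_ellF] .

lemma ellF_le_iff: "ellF a k \<le> ellF b k \<longleftrightarrow> a \<le> b"
  using strict_mono_less_eq[OF strict_mono_ellF] .

lemma ellF_eq_iff: "ellF a k = ellF b k \<longleftrightarrow> a = b"
  using strict_mono_eq[OF strict_mono_ellF] .

lemma mono_ellF_minus_self: "mono (\<lambda>\<phi>. ellF \<phi> k - \<phi>)"
proof (intro monoI)
  fix a b :: real assume "a \<le> b"
  have "1 \<le> 1 / Delta k x" for x
    using Delta_pos[of x] Delta_le_1[of k x] modulus_sin_sq_less_1 k2 by auto
  then show "(\<lambda>\<phi>. ellF \<phi> k - \<phi>) a \<le> (\<lambda>\<phi>. ellF \<phi> k - \<phi>) b"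
    by (intro DERIV_nonneg_imp_nondecreasing[OF \<open>a \<le> b\<close>])
       (auto intro!: exI derivative_eq_intros DERIV_ellF)
qed

lemma ellF_ge_self: "0 \<le> \<phi> \<Longrightarrow> \<phi> \<le> ellF \<phi> k"
  using monoD[OF mono_ellF_minus_self, of 0 \<phi>] by simp

lemma ellF_le_self: "\<phi> \<le> 0 \<Longrightarrow> ellF \<phi> k \<le> \<phi>"
  using monoD[OF mono_ellF_minus_self, of \<phi> 0] by simp

lemma ellF_minus: "ellF (- \<phi>) k = - ellF \<phi> k"
proof -
  have "((\<lambda>x. ellF (- x) k + ellF x k) has_real_derivative 0) (at x)" for x
    by (auto intro!: derivative_eq_intros DERIV_chain2[OF DERIV_ellF] DERIV_ellF)
  from DERIV_isconst_all[OF allI[OF this], of \<phi> 0] show ?thesis by simp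
qed

lemma ellF_add_pi: "ellF (\<phi> + pi) k = ellF \<phi> k + ellF pi k"
proof -
  have "((\<lambda>x. ellF (x + pi) k - ellF x k) has_real_derivative 0) (at x)" for x
    by (auto intro!: derivative_eq_intros DERIV_chain2[OF DERIV_ellF] DERIV_ellF)
  from DERIV_isconst_all[OF allI[OF this], of \<phi> 0] show ?thesis by simp
qed

lemma ellF_pi: "ellF pi k = 2 * ellF (pi/2) k"
  using ellF_add_pi[of "-pi/2"] ellF_minus[of "pi/2"] by simp

lemma ellF_surj: "\<exists>\<phi>. ellF \<phi> k = u"
proof (cases "0 \<le> u")
  case True
  then have "\<exists>\<phi>. 0 \<le> \<phi> \<and> \<phi> \<le> u \<and> ellF \<phi> k = u"
    using ellF_ge_self[OF True] isCont_ellF by (intro IVT) auto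
  then show ?thesis by blast
next
  case False
  then have "\<exists>\<phi>. u \<le> \<phi> \<and> \<phi> \<le> 0 \<and> ellF \<phi> k = u"
    using ellF_le_self[of u] isCont_ellF by (intro IVT) auto
  then show ?thesis by blast
qed

lemma ellF_jacobi_am [simp]: "ellF (jacobi_am u k) k = u"
  unfolding jacobi_am_def by (rule theI') (use ellF_surj ellF_eq_iff in metis)

lemma jacobi_am_ellF [simp]: "jacobi_am (ellF \<phi> k) k = \<phi>"
  unfolding jacobi_am_def by (rule the_equality) (use ellF_eq_iff in auto)

lemma jacobi_am_less_iff: "jacobi_am a k < jacobi_am b k \<longleftrightarrow> a < b"
  by (metis ellF_jacobi_am ellF_less_iff)

lemma jacobi_am_le_iff: "jacobi_am a k \<le> jacobi_am b k \<longleftrightarrow> a \<le> b"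
  by (metis ellF_jacobi_am ellF_le_iff)

lemma jacobi_am_0 [simp]: "jacobi_am 0 k = 0"
  using jacobi_am_ellF[of 0] by simp

lemma jacobi_am_minus: "jacobi_am (- u) k = - jacobi_am u k"
  by (metis ellF_jacobi_am jacobi_am_ellF ellF_minus)

lemma jacobi_am_ellK: "jacobi_am (ellK k) k = pi/2"
  unfolding ellK_def by simp

lemma jacobi_am_add_period: "jacobi_am (u + 2 * ellK k) k = jacobi_am u k + pi"
  unfolding ellK_def by (metis ellF_jacobi_am jacobi_am_ellF ellF_add_pi ellF_pi)

lemma sin_sq_jacobi_am_strict_mono:
  assumes "0 \<le> u" "u < v" "v \<le> ellK k"
  shows "(sin (jacobi_am u k))\<^sup>2 < (sin (jacobi_am v k))\<^sup>2"
proof -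
  have "0 \<le> jacobi_am u k" "jacobi_am u k < jacobi_am v k" "jacobi_am v k \<le> pi/2"
    using assms by (metis jacobi_am_0 jacobi_am_le_iff jacobi_am_less_iff jacobi_am_ellK)+
  then have "0 \<le> sin (jacobi_am u k)" "sin (jacobi_am u k) < sin (jacobi_am v k)"
    by (auto intro: sin_ge_zero sin_monotone_2pi)
  then show ?thesis by (simp add: power_strict_mono)
qed

lemma isCont_jacobi_am: "isCont (\<lambda>u. jacobi_am u k) u"
  using isCont_inverse_function[where d=1 and f="\<lambda>\<phi>. ellF \<phi> k" and x="jacobi_am u k"]
  by (simp add: isCont_ellF)

lemma jacobi_am_has_real_derivative:
  "((\<lambda>u. jacobi_am u k) has_real_derivative Delta k (jacobi_am u k)) (at u)"
proof -
  have "((\<lambda>u. jacobi_am u k) has_real_derivative inverse (1 / Delta k (jacobi_am u k))) (at u)"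
    by (rule DERIV_inverse_function[where f="\<lambda>\<phi>. ellF \<phi> k" and a="u - 1" and b="u + 1"])
       (use DERIV_ellF Delta_pos isCont_jacobi_am in \<open>auto simp: less_imp_neq[symmetric]\<close>)
  then show ?thesis by simp
qed

end

section \<open>The ansatz and the ODE\<close>

definition beta_factor :: "real \<Rightarrow> real \<Rightarrow> real" where
  "beta_factor \<beta> \<theta> = 1 / sqrt (1 + \<beta>\<^sup>2 * (sin \<theta>)\<^sup>2)"

lemma beta_denom_pos: "1 + \<beta>\<^sup>2 * (sin \<theta>)\<^sup>2 > (0::real)"
  by (simp add: add_pos_nonneg)

lemma beta_factor_sq: "(beta_factor \<beta> \<theta>)\<^sup>2 * (1 + \<beta>\<^sup>2 * (sin \<theta>)\<^sup>2) = 1"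
  unfolding beta_factor_def using beta_denom_pos[of \<beta> \<theta>] by (simp add: power_divide)

lemma beta_factor_has_real_derivative:
  "(beta_factor \<beta> has_real_derivative - \<beta>\<^sup>2 * sin \<theta> * cos \<theta> * (beta_factor \<beta> \<theta>)^3) (at \<theta>)"
proof -
  have D: "1 + \<beta>\<^sup>2 * (sin \<theta>)\<^sup>2 > 0" by (rule beta_denom_pos)
  have "(beta_factor \<beta> has_real_derivative
     - (inverse (sqrt (1 + \<beta>\<^sup>2 * (sin \<theta>)\<^sup>2)) / 2 * (\<beta>\<^sup>2 * (2 * sin \<theta> * cos \<theta>)))
        / (sqrt (1 + \<beta>\<^sup>2 * (sin \<theta>)\<^sup>2))\<^sup>2) (at \<theta>)"
    unfolding beta_factor_def[abs_def] using D
    by (auto intro!: derivative_eq_intros simp: power2_eq_square)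
  then show ?thesis
    unfolding beta_factor_def using D by (simp add: field_simps power3_eq_cube power2_eq_square)
qed

lemma Delta_has_real_derivative:
  assumes "k\<^sup>2 < 1"
  shows "(Delta k has_real_derivative - k\<^sup>2 * sin \<theta> * cos \<theta> / Delta k \<theta>) (at \<theta>)"
proof -
  have P: "1 - k\<^sup>2 * (sin \<theta>)\<^sup>2 > 0" using modulus_sin_sq_less_1[of k \<theta>] assms by simp
  have "(Delta k has_real_derivative
     inverse (sqrt (1 - k\<^sup>2 * (sin \<theta>)\<^sup>2)) / 2 * (- (k\<^sup>2 * (2 * sin \<theta> * cos \<theta>)))) (at \<theta>)"
    unfolding Delta_def[abs_def] using P
    by (auto intro!: derivative_eq_intros simp: power2_eq_square)
  then show ?thesis unfolding Delta_def using P by (simp add: field_simps)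
qed

text \<open>In terms of the angle \<open>\<theta> = am(x/2g)\<close> the ansatz reads \<open>\<Phi> = angle_profile \<eta> k \<beta> \<theta>\<close>,
  and since \<open>\<theta>' = Delta k \<theta> / 2g\<close> we get \<open>\<Phi>' = angle_slope \<eta> k \<beta> \<theta> / 2g\<close> and
  \<open>\<Phi>'' = angle_slope_deriv \<eta> k \<beta> \<theta> * Delta k \<theta> / 4g\<^sup>2\<close>.\<close>

definition angle_profile :: "real \<Rightarrow> real \<Rightarrow> real \<Rightarrow> real \<Rightarrow> real" where
  "angle_profile \<eta> k \<beta> \<theta> = sqrt \<eta> * Delta k \<theta> * beta_factor \<beta> \<theta>"

definition angle_slope :: "real \<Rightarrow> real \<Rightarrow> real \<Rightarrow> real \<Rightarrow> real" where
  "angle_slope \<eta> k \<beta> \<theta> = - sqrt \<eta> * (k\<^sup>2 + \<beta>\<^sup>2) * sin \<theta> * cos \<theta> * (beta_factor \<beta> \<theta>)^3"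

definition angle_slope_deriv :: "real \<Rightarrow> real \<Rightarrow> real \<Rightarrow> real \<Rightarrow> real" where
  "angle_slope_deriv \<eta> k \<beta> \<theta> = - sqrt \<eta> * (k\<^sup>2 + \<beta>\<^sup>2) * (beta_factor \<beta> \<theta>)^3 *
     ((cos \<theta>)\<^sup>2 - (sin \<theta>)\<^sup>2 - 3 * \<beta>\<^sup>2 * (sin \<theta>)\<^sup>2 * (cos \<theta>)\<^sup>2 * (beta_factor \<beta> \<theta>)\<^sup>2)"

lemma angle_profile_has_real_derivative:
  assumes k2: "k\<^sup>2 < 1"
  shows "(angle_profile \<eta> k \<beta> has_real_derivative angle_slope \<eta> k \<beta> \<theta> / Delta k \<theta>) (at \<theta>)"
proof -
  let ?w = "Delta k \<theta>" and ?r = "beta_factor \<beta> \<theta>"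
  let ?D = "sqrt \<eta> * ((- k\<^sup>2 * sin \<theta> * cos \<theta> / ?w) * ?r + ?w * (- \<beta>\<^sup>2 * sin \<theta> * cos \<theta> * ?r^3))"
  have deriv: "(angle_profile \<eta> k \<beta> has_real_derivative ?D) (at \<theta>)"
    unfolding angle_profile_def[abs_def]
    by (auto intro!: derivative_eq_intros Delta_has_real_derivative[OF k2]
        beta_factor_has_real_derivative simp: algebra_simps)
  have "?w\<^sup>2 = 1 - k\<^sup>2 * (sin \<theta>)\<^sup>2"
    using Delta_sq modulus_sin_sq_less_1 k2 by auto
  then have eq: "k\<^sup>2 * ?r + ?w\<^sup>2 * \<beta>\<^sup>2 * ?r^3 = (k\<^sup>2 + \<beta>\<^sup>2) * ?r^3"
    using beta_factor_sq[of \<beta> \<theta>] by algebra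
  have "?D = - sqrt \<eta> * sin \<theta> * cos \<theta> * (k\<^sup>2 * ?r + ?w\<^sup>2 * \<beta>\<^sup>2 * ?r^3) / ?w"
    using Delta_pos[OF k2, of \<theta>] by (simp add: field_simps power2_eq_square power3_eq_cube)
  also have "\<dots> = angle_slope \<eta> k \<beta> \<theta> / ?w"
    unfolding eq angle_slope_def by simp
  finally show ?thesis using deriv by simp
qed

lemma angle_slope_has_real_derivative:
  "(angle_slope \<eta> k \<beta> has_real_derivative angle_slope_deriv \<eta> k \<beta> \<theta>) (at \<theta>)"
proof -
  let ?r = "beta_factor \<beta> \<theta>"
  have "(angle_slope \<eta> k \<beta> has_real_derivative
     - sqrt \<eta> * (k\<^sup>2 + \<beta>\<^sup>2) * ((cos \<theta> * cos \<theta> - sin \<theta> * sin \<theta>) * ?r^3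
        + sin \<theta> * cos \<theta> * (3 * ?r\<^sup>2 * (- \<beta>\<^sup>2 * sin \<theta> * cos \<theta> * ?r^3)))) (at \<theta>)"
    unfolding angle_slope_def[abs_def]
    by (auto intro!: derivative_eq_intros beta_factor_has_real_derivative
        simp: algebra_simps power2_eq_square power3_eq_cube)
  then show ?thesis unfolding angle_slope_deriv_def
    by (simp add: algebra_simps power2_eq_square power3_eq_cube)
qed

text \<open>After multiplying by \<open>4 g\<^sup>2 (1 + \<beta>\<^sup>2 S)\<^sup>2 / \<Phi>\<close> the ODE becomes a quadratic polynomial
  in \<open>S = sin\<^sup>2 \<theta>\<close>; these are the vanishing of its three coefficients.\<close>

definition ansatz_equations :: "real \<Rightarrow> real \<Rightarrow> real \<Rightarrow> real \<Rightarrow> real \<Rightarrow> real \<Rightarrow> bool" where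
  "ansatz_equations \<omega> c \<eta> k \<beta> g \<longleftrightarrow>
     (k\<^sup>2 + \<beta>\<^sup>2) + 4*g\<^sup>2*((\<omega> - c\<^sup>2/4) + c*\<eta>/2 - 3*\<eta>\<^sup>2/16) = 0 \<and>
     -2*(k\<^sup>2+\<beta>\<^sup>2)*(1+\<beta>\<^sup>2) + 4*g\<^sup>2*(2*(\<omega> - c\<^sup>2/4)*\<beta>\<^sup>2 + c/2*\<eta>*(\<beta>\<^sup>2-k\<^sup>2) + 3/8*\<eta>\<^sup>2*k\<^sup>2) = 0 \<and>
     (k\<^sup>2+\<beta>\<^sup>2)*\<beta>\<^sup>2 + 4*g\<^sup>2*((\<omega> - c\<^sup>2/4)*\<beta>^4 - c/2*\<eta>*k\<^sup>2*\<beta>\<^sup>2 - 3/16*\<eta>\<^sup>2*k^4) = 0"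

lemma ansatz_polynomial_eq_0:
  fixes S :: real
  assumes "ansatz_equations \<omega> c \<eta> k \<beta> g"
  defines "D \<equiv> 1 + \<beta>\<^sup>2 * S"
  shows "(k\<^sup>2 + \<beta>\<^sup>2) * ((1 - 2*S)*D - 3*\<beta>\<^sup>2*S*(1-S)) + 4*g\<^sup>2 * ((\<omega> - c\<^sup>2/4) * D\<^sup>2
           + c/2 * (\<eta> * (1 - k\<^sup>2*S) * D) - 3/16 * (\<eta>\<^sup>2 * (1 - k\<^sup>2*S)\<^sup>2)) = 0"
proof -
  let ?a = "\<omega> - c\<^sup>2/4"
  have "(k\<^sup>2 + \<beta>\<^sup>2) * ((1 - 2*S)*D - 3*\<beta>\<^sup>2*S*(1-S)) + 4*g\<^sup>2 * (?a * D\<^sup>2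
           + c/2 * (\<eta> * (1 - k\<^sup>2*S) * D) - 3/16 * (\<eta>\<^sup>2 * (1 - k\<^sup>2*S)\<^sup>2))
      = ((k\<^sup>2 + \<beta>\<^sup>2) + 4*g\<^sup>2*(?a + c*\<eta>/2 - 3*\<eta>\<^sup>2/16))
        + S * (-2*(k\<^sup>2+\<beta>\<^sup>2)*(1+\<beta>\<^sup>2) + 4*g\<^sup>2*(2*?a*\<beta>\<^sup>2 + c/2*\<eta>*(\<beta>\<^sup>2-k\<^sup>2) + 3/8*\<eta>\<^sup>2*k\<^sup>2))
        + S\<^sup>2 * ((k\<^sup>2+\<beta>\<^sup>2)*\<beta>\<^sup>2 + 4*g\<^sup>2*(?a*\<beta>^4 - c/2*\<eta>*k\<^sup>2*\<beta>\<^sup>2 - 3/16*\<eta>\<^sup>2*k^4))"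
    unfolding D_def by (simp add: field_simps power2_eq_square power4_eq_xxxx)
  then show ?thesis using assms(1) unfolding ansatz_equations_def by simp
qed

lemma angle_profile_ode:
  fixes \<theta> :: real
  assumes k2: "k\<^sup>2 < 1" and eta: "\<eta> > 0" and g: "g > 0"
    and eqs: "ansatz_equations \<omega> c \<eta> k \<beta> g"
  defines "F \<equiv> angle_profile \<eta> k \<beta> \<theta>"
  shows "- (angle_slope_deriv \<eta> k \<beta> \<theta> * Delta k \<theta> / (4*g\<^sup>2)) + (\<omega> - c\<^sup>2/4) * F
          + c/2 * \<bar>F\<bar>^2 * F - 3/16 * \<bar>F\<bar>^4 * F = 0"
proof -
  define S where "S = (sin \<theta>)\<^sup>2"
  define D where "D = 1 + \<beta>\<^sup>2 * S"
  define K where "K = k\<^sup>2 + \<beta>\<^sup>2"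
  define q where "q = sqrt \<eta>"
  define w where "w = Delta k \<theta>"
  define r where "r = beta_factor \<beta> \<theta>"
  have rD: "r\<^sup>2 * D = 1" unfolding r_def D_def S_def by (rule beta_factor_sq)
  have w2: "w\<^sup>2 = 1 - k\<^sup>2 * S"
    unfolding w_def S_def using Delta_sq[OF modulus_sin_sq_less_1] k2 by auto
  have co2: "(cos \<theta>)\<^sup>2 = 1 - S" unfolding S_def by (simp add: cos_squared_eq)
  have q2: "q\<^sup>2 = \<eta>" unfolding q_def using eta by simp
  have F: "F = q * w * r" unfolding F_def angle_profile_def q_def w_def r_def by simp
  have slope_term: "angle_slope_deriv \<eta> k \<beta> \<theta> * w = - q * w * r^5 * K * ((1 - 2*S)*D - 3*\<beta>\<^sup>2*S*(1-S))"
    unfolding angle_slope_deriv_def q_def[symmetric] r_def[symmetric] K_def[symmetric]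
      S_def[symmetric] co2 using rD by algebra
  have linear_term: "q * w * r = q * w * r^5 * D\<^sup>2" using rD by algebra
  have cubic_term: "(q * w * r)^3 = q * w * r^5 * (\<eta> * (1 - k\<^sup>2*S) * D)" using rD w2 q2 by algebra
  have quintic_term: "(q * w * r)^5 = q * w * r^5 * (\<eta>\<^sup>2 * (1 - k\<^sup>2*S)\<^sup>2)" using rD w2 q2 by algebra
  have "- (angle_slope_deriv \<eta> k \<beta> \<theta> * w / (4*g\<^sup>2)) + (\<omega> - c\<^sup>2/4) * (q*w*r)
        + c/2 * (q*w*r)^3 - 3/16 * (q*w*r)^5
     = q * w * r^5 / (4*g\<^sup>2) * (K * ((1 - 2*S)*D - 3*\<beta>\<^sup>2*S*(1-S)) + 4*g\<^sup>2 * ((\<omega> - c\<^sup>2/4) * D\<^sup>2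
        + c/2 * (\<eta> * (1 - k\<^sup>2*S) * D) - 3/16 * (\<eta>\<^sup>2 * (1 - k\<^sup>2*S)\<^sup>2)))"
    apply (subst slope_term, subst linear_term, subst cubic_term, subst quintic_term)
    using g by (simp add: field_simps)
  also have "\<dots> = 0"
    using ansatz_polynomial_eq_0[OF eqs] unfolding K_def D_def by simp
  finally show ?thesis unfolding F w_def[symmetric]
    by (simp add: power_abs power3_eq_cube power2_eq_square power4_eq_xxxx eval_nat_numeral)
qed

definition bump_profile :: "real \<Rightarrow> real \<Rightarrow> real \<Rightarrow> real \<Rightarrow> real \<Rightarrow> real" where
  "bump_profile \<eta> k \<beta> g x = angle_profile \<eta> k \<beta> (jacobi_am (x / (2*g)) k)"

lemma bump_profile_solves_ode:
  assumes k2: "k\<^sup>2 < 1" and eta: "\<eta> > 0" and g: "g > 0"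
    and eqs: "ansatz_equations \<omega> c \<eta> k \<beta> g"
  shows "solves_ode \<omega> c (bump_profile \<eta> k \<beta> g)"
proof -
  define \<phi> where "\<phi> x = jacobi_am (x / (2*g)) k" for x
  have d\<phi>: "(\<phi> has_real_derivative Delta k (\<phi> x) * (1 / (2*g))) (at x)" for x
    unfolding \<phi>_def[abs_def]
    by (rule DERIV_chain2[OF jacobi_am_has_real_derivative[OF k2]])
       (use g in \<open>auto intro!: derivative_eq_intros\<close>)
  define \<Phi>1 where "\<Phi>1 x = angle_slope \<eta> k \<beta> (\<phi> x) / (2*g)" for x
  define \<Phi>2 where "\<Phi>2 x = angle_slope_deriv \<eta> k \<beta> (\<phi> x) * Delta k (\<phi> x) / (4*g\<^sup>2)" for x
  have "(bump_profile \<eta> k \<beta> g has_real_derivative \<Phi>1 x) (at x)" for x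
  proof -
    have "((\<lambda>x. angle_profile \<eta> k \<beta> (\<phi> x)) has_real_derivative
        angle_slope \<eta> k \<beta> (\<phi> x) / Delta k (\<phi> x) * (Delta k (\<phi> x) * (1 / (2*g)))) (at x)"
      by (rule DERIV_chain2[OF angle_profile_has_real_derivative[OF k2] d\<phi>])
    then show ?thesis
      using Delta_pos[OF k2, of "\<phi> x"]
      unfolding bump_profile_def[abs_def] \<phi>_def[symmetric] \<Phi>1_def by simp
  qed
  moreover have "(\<Phi>1 has_real_derivative \<Phi>2 x) (at x)" for x
  proof -
    have "((\<lambda>x. angle_slope \<eta> k \<beta> (\<phi> x) / (2*g)) has_real_derivative
        angle_slope_deriv \<eta> k \<beta> (\<phi> x) * (Delta k (\<phi> x) * (1 / (2*g))) / (2*g)) (at x)"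
      by (intro DERIV_cdivide DERIV_chain2[OF angle_slope_has_real_derivative d\<phi>])
    then show ?thesis
      using g unfolding \<Phi>1_def[abs_def] \<Phi>2_def by (simp add: power2_eq_square field_simps)
  qed
  moreover have "- \<Phi>2 x + (\<omega> - c\<^sup>2 / 4) * bump_profile \<eta> k \<beta> g x
      + c / 2 * \<bar>bump_profile \<eta> k \<beta> g x\<bar>^2 * bump_profile \<eta> k \<beta> g x
      - 3 / 16 * \<bar>bump_profile \<eta> k \<beta> g x\<bar>^4 * bump_profile \<eta> k \<beta> g x = 0" for x
    using angle_profile_ode[OF k2 eta g eqs, of "\<phi> x"] unfolding \<Phi>2_def bump_profile_def \<phi>_def by simp
  ultimately show ?thesis unfolding solves_ode_def by blast
qed

definition sin_sq_profile :: "real \<Rightarrow> real \<Rightarrow> real \<Rightarrow> real \<Rightarrow> real" where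
  "sin_sq_profile \<eta> k \<beta> S = sqrt \<eta> * sqrt ((1 - k\<^sup>2 * S) / (1 + \<beta>\<^sup>2 * S))"

lemma angle_profile_eq_sin_sq_profile:
  "angle_profile \<eta> k \<beta> \<theta> = sin_sq_profile \<eta> k \<beta> ((sin \<theta>)\<^sup>2)"
  unfolding angle_profile_def sin_sq_profile_def Delta_def beta_factor_def
  by (simp add: real_sqrt_divide)

lemma bump_profile_eq_sin_sq_profile:
  "bump_profile \<eta> k \<beta> g x = sin_sq_profile \<eta> k \<beta> ((sin (jacobi_am (x / (2*g)) k))\<^sup>2)"
  unfolding bump_profile_def angle_profile_eq_sin_sq_profile ..

lemma sin_sq_profile_pos:
  assumes "k\<^sup>2 < 1" "\<eta> > 0" "0 \<le> S" "S \<le> 1"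
  shows "sin_sq_profile \<eta> k \<beta> S > 0"
proof -
  have "k\<^sup>2 * S \<le> k\<^sup>2" using assms mult_left_le[of S "k\<^sup>2"] by simp
  then have "k\<^sup>2 * S < 1" using assms by simp
  then show ?thesis unfolding sin_sq_profile_def using assms by (simp add: add_pos_nonneg)
qed

lemma sin_sq_profile_strict_antimono:
  assumes "\<eta> > 0" "k \<noteq> 0" "0 \<le> S1" "S1 < S2"
  shows "sin_sq_profile \<eta> k \<beta> S2 < sin_sq_profile \<eta> k \<beta> S1"
proof -
  have D: "1 + \<beta>\<^sup>2 * S1 > 0" "1 + \<beta>\<^sup>2 * S2 > 0" using assms by (simp_all add: add_pos_nonneg)
  have "(1 - k\<^sup>2 * S1) * (1 + \<beta>\<^sup>2 * S2) - (1 - k\<^sup>2 * S2) * (1 + \<beta>\<^sup>2 * S1) = (k\<^sup>2 + \<beta>\<^sup>2) * (S2 - S1)"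
    by (simp add: algebra_simps)
  moreover have "(k\<^sup>2 + \<beta>\<^sup>2) * (S2 - S1) > 0" using assms by (simp add: add_pos_nonneg)
  ultimately have "(1 - k\<^sup>2 * S2) / (1 + \<beta>\<^sup>2 * S2) < (1 - k\<^sup>2 * S1) / (1 + \<beta>\<^sup>2 * S1)"
    using D by (simp add: divide_simps)
  then show ?thesis unfolding sin_sq_profile_def using assms by simp
qed

lemma bump_profile_single_bump:
  assumes k2: "k\<^sup>2 < 1" and k0: "k \<noteq> 0" and eta: "\<eta> > 0" and g: "g > 0"
    and eqs: "ansatz_equations \<omega> c \<eta> k \<beta> g" and L: "L = 2 * g * ellK k"
  shows "single_bump_solution \<omega> c L (bump_profile \<eta> k \<beta> g)"
proof -
  let ?P = "bump_profile \<eta> k \<beta> g"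
  let ?S = "\<lambda>x. (sin (jacobi_am (x / (2*g)) k))\<^sup>2"
  have S01: "0 \<le> ?S x" "?S x \<le> 1" for x by (simp_all add: abs_square_le_1)
  have L2g: "L / (2*g) = ellK k" using g L by simp
  have S_L: "?S L = 1" unfolding L2g jacobi_am_ellK[OF k2] by simp
  have "?P (x + 2 * L) = ?P x" for x
  proof -
    have "(x + 2 * L) / (2 * g) = x / (2*g) + 2 * ellK k" using g L by (simp add: field_simps)
    then show ?thesis by (simp add: bump_profile_eq_sin_sq_profile jacobi_am_add_period[OF k2])
  qed
  moreover have "?P (- x) = ?P x" for x
    using jacobi_am_minus[OF k2]
    by (simp add: bump_profile_eq_sin_sq_profile minus_divide_left[symmetric])
  moreover have mono: "?S x < ?S y" if "0 \<le> x" "x < y" "y \<le> L" for x y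
  proof -
    have "0 \<le> x/(2*g)" "x/(2*g) < y/(2*g)" "y/(2*g) \<le> ellK k"
      using that g unfolding L2g[symmetric] by (auto intro: divide_right_mono divide_strict_right_mono)
    then show ?thesis by (rule sin_sq_jacobi_am_strict_mono[OF k2])
  qed
  moreover have "?P y < ?P x" if "0 \<le> x" "x < y" "y \<le> L" for x y
    unfolding bump_profile_eq_sin_sq_profile
    using sin_sq_profile_strict_antimono[OF eta k0 _ mono[OF that]] by simp
  moreover have "?P L \<le> ?P x \<and> ?P x \<le> ?P 0" for x
    unfolding bump_profile_eq_sin_sq_profile S_L
    using sin_sq_profile_strict_antimono[OF eta k0, of _ _ \<beta>] S01[of x]
    by (cases "?S x = 0"; cases "?S x = 1") (auto simp: less_le jacobi_am_0[OF k2])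
  moreover have "0 < ?P x" for x
    unfolding bump_profile_eq_sin_sq_profile using sin_sq_profile_pos[OF k2 eta S01] .
  ultimately show ?thesis
    unfolding single_bump_solution_def using bump_profile_solves_ode[OF k2 eta g eqs] by blast
qed

lemma bump_profile_sq:
  assumes "\<eta> > 0"
  shows "(bump_profile \<eta> k \<beta> g x)\<^sup>2 =
    \<eta> * (jacobi_dn (x / (2 * g)) k)\<^sup>2 / (1 + \<beta>\<^sup>2 * (jacobi_sn (x / (2 * g)) k)\<^sup>2)"
  unfolding bump_profile_def angle_profile_def jacobi_dn_eq_Delta jacobi_sn_def beta_factor_def
  using assms beta_denom_pos by (simp add: power_mult_distrib power_divide)

section \<open>Parametrising the solutions by the minimum of \<open>\<Phi>\<^sup>2\<close>\<close>

lemma ansatz_equations_of_roots: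
  fixes \<eta>1 p \<eta>3 :: real
  assumes nz: "\<eta>3 \<noteq> 0" "p \<noteq> \<eta>1"
    and k: "k\<^sup>2 = - \<eta>1 * (\<eta>3 - p) / (\<eta>3 * (p - \<eta>1))"
    and \<beta>: "\<beta>\<^sup>2 = (\<eta>3 - p) / (p - \<eta>1)"
    and g: "g\<^sup>2 = 4 / (\<eta>3 * (p - \<eta>1))"
    and \<omega>: "\<omega> - c\<^sup>2/4 = - (\<eta>1 * p + \<eta>1 * \<eta>3 + p * \<eta>3) / 16"
    and c: "c = (\<eta>1 + p + \<eta>3) / 4"
  shows "ansatz_equations \<omega> c \<eta>3 k \<beta> g"
proof -
  obtain d where d: "\<eta>1 = p - d" "d \<noteq> 0" using nz by (intro that[of "p - \<eta>1"]) auto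
  have b4: "\<beta>^4 = (\<beta>\<^sup>2)\<^sup>2" and k4: "k^4 = (k\<^sup>2)\<^sup>2" by simp_all
  show ?thesis
    unfolding ansatz_equations_def \<omega> b4 k4 unfolding k \<beta> g c d(1)
    using nz(1) d(2) by (simp add: field_simps power2_eq_square)
qed

locale soliton_parameters =
  fixes \<omega> c :: real
  assumes admissible: "\<omega> > c\<^sup>2 / 4 \<or> (\<omega> = c\<^sup>2 / 4 \<and> c > 0)"
begin

lemma omega_pos: "\<omega> > 0"
  using admissible
proof
  assume "\<omega> > c\<^sup>2 / 4"
  then show ?thesis using zero_le_power2[of c] by linarith
next
  assume h: "\<omega> = c\<^sup>2 / 4 \<and> c > 0"
  then have "c\<^sup>2 > 0" by simp
  then show ?thesis using h by linarith
qed

lemma c_le_2_sqrt_omega: "c \<le> 2 * sqrt \<omega>"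
proof -
  have "sqrt (c\<^sup>2) \<le> sqrt (4 * \<omega>)" using admissible by (intro real_sqrt_le_mono) auto
  then show ?thesis by (simp add: real_sqrt_mult)
qed

lemma c_less_2_sqrt_omega: "\<omega> > c\<^sup>2 / 4 \<Longrightarrow> c < 2 * sqrt \<omega>"
proof -
  assume "\<omega> > c\<^sup>2 / 4"
  then have "sqrt (c\<^sup>2) < sqrt (4 * \<omega>)" by (intro real_sqrt_less_mono) auto
  then show ?thesis by (simp add: real_sqrt_mult)
qed

lemma minus_2_sqrt_omega_less_c: "- 2 * sqrt \<omega> < c"
proof (cases "\<omega> > c\<^sup>2 / 4")
  case True
  then have "sqrt (c\<^sup>2) < sqrt (4 * \<omega>)" by (intro real_sqrt_less_mono) auto
  then show ?thesis by (simp add: real_sqrt_mult)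
next
  case False
  then have "c > 0" using admissible by auto
  moreover have "sqrt \<omega> > 0" using omega_pos by simp
  ultimately show ?thesis by linarith
qed

definition Q :: real where
  "Q = sqrt (48 * \<omega> + 4 * c\<^sup>2)"

lemma Q_pos: "Q > 0" and Q_sq: "Q\<^sup>2 = 48 * \<omega> + 4 * c\<^sup>2"
  unfolding Q_def using omega_pos by (simp_all add: add_pos_nonneg)

lemma alpha0_eq: "alpha0 \<omega> c = (4*c + Q) / 3"
  unfolding alpha0_def Q_def by simp

lemma abs_4c_le_Q: "\<bar>4*c\<bar> \<le> Q"
proof -
  have "(4*c)\<^sup>2 \<le> Q\<^sup>2" unfolding Q_sq using admissible by (auto simp: power2_eq_square)
  then show ?thesis using power2_le_iff_abs_le[of Q "4*c"] Q_pos by simp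
qed

lemma alpha0_pos: "alpha0 \<omega> c > 0"
proof (cases "c \<ge> 0")
  case False
  then have "\<not> Q\<^sup>2 \<le> (4*c)\<^sup>2" unfolding Q_sq using admissible by (auto simp: power2_eq_square)
  then have "\<bar>4*c\<bar> < Q" using Q_pos abs_le_square_iff[of Q "4*c"] by simp
  then show ?thesis unfolding alpha0_eq by simp
qed (use Q_pos in \<open>simp add: alpha0_eq\<close>)

text \<open>\<open>A(p) - (3p - 4c)\<^sup>2\<close> is a downward parabola with roots \<open>(4c - Q)/3 \<le> 0\<close> and \<open>\<alpha>\<^sub>0\<close>,
  hence nonnegative for \<open>0 < p \<le> \<alpha>\<^sub>0\<close>; this is what makes \<open>p \<le> \<eta>\<^sub>3(p)\<close> below.\<close>

lemma Apoly_minus_sq: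
  "Apoly \<omega> c p - (3*p - 4*c)\<^sup>2 = -12 * ((p - alpha0 \<omega> c) * (p - (4*c - Q)/3))"
  unfolding Apoly_def alpha0_eq using Q_sq by (simp add: field_simps power2_eq_square)

lemma Apoly_alpha0: "Apoly \<omega> c (alpha0 \<omega> c) = Q\<^sup>2"
  using Apoly_minus_sq[of "alpha0 \<omega> c"] by (simp add: alpha0_eq field_simps)

lemma sq_less_Apoly:
  assumes "0 < p" "p < alpha0 \<omega> c"
  shows "(3*p - 4*c)\<^sup>2 < Apoly \<omega> c p"
proof -
  have "(p - alpha0 \<omega> c) * (p - (4*c - Q)/3) < 0"
    using assms abs_4c_le_Q by (intro mult_neg_pos) auto
  then show ?thesis using Apoly_minus_sq[of p] by linarith
qed

lemma sq_le_Apoly: "0 < p \<Longrightarrow> p \<le> alpha0 \<omega> c \<Longrightarrow> (3*p - 4*c)\<^sup>2 \<le> Apoly \<omega> c p"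
  using sq_less_Apoly[of p] Apoly_minus_sq[of p] by (cases "p = alpha0 \<omega> c") auto

lemma alpha0_less: "alpha0 \<omega> c < 2*c + 4 * sqrt \<omega>"
proof -
  have s: "sqrt \<omega> > 0" "(sqrt \<omega>)\<^sup>2 = \<omega>" using omega_pos by auto
  have "(2*c + 12 * sqrt \<omega>)\<^sup>2 - Q\<^sup>2 = 48 * sqrt \<omega> * (c + 2 * sqrt \<omega>)"
    unfolding Q_sq using s(2) by (simp add: algebra_simps power2_eq_square)
  moreover have "48 * sqrt \<omega> * (c + 2 * sqrt \<omega>) > 0"
    using s minus_2_sqrt_omega_less_c by simp
  ultimately have "Q\<^sup>2 < (2*c + 12 * sqrt \<omega>)\<^sup>2" by linarith
  moreover have "0 \<le> 2*c + 12 * sqrt \<omega>" using s minus_2_sqrt_omega_less_c by linarith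
  ultimately have "Q < 2*c + 12 * sqrt \<omega>" by (rule power_less_imp_less_base)
  then show ?thesis unfolding alpha0_eq by simp
qed

text \<open>Writing \<open>u = \<Phi>\<^sup>2\<close>, the ODE has the first integral
  \<open>u'\<^sup>2 = -(u/4)(u - \<eta>\<^sub>1)(u - \<eta>\<^sub>2)(u - \<eta>\<^sub>3)\<close> with \<open>\<eta>\<^sub>1 + \<eta>\<^sub>2 + \<eta>\<^sub>3 = 4c\<close> and
  \<open>\<eta>\<^sub>1\<eta>\<^sub>2 + \<eta>\<^sub>1\<eta>\<^sub>3 + \<eta>\<^sub>2\<eta>\<^sub>3 = -16(\<omega> - c\<^sup>2/4)\<close>.  The free parameter is \<open>p = \<eta>\<^sub>2\<close>, the minimum
  of \<open>u\<close>; at \<open>p = \<alpha>\<^sub>0\<close> the roots \<open>\<eta>\<^sub>2, \<eta>\<^sub>3\<close> collide and the modulus vanishes.\<close>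

definition sqrtA :: "real \<Rightarrow> real" where
  "sqrtA p = sqrt (Apoly \<omega> c p)"

definition eta1 :: "real \<Rightarrow> real" where
  "eta1 p = (4*c - p - sqrtA p) / 2"

definition eta3 :: "real \<Rightarrow> real" where
  "eta3 p = (4*c - p + sqrtA p) / 2"

definition modulus :: "real \<Rightarrow> real" where
  "modulus p = sqrt (- eta1 p * (eta3 p - p) / (eta3 p * (p - eta1 p)))"

definition beta_coeff :: "real \<Rightarrow> real" where
  "beta_coeff p = sqrt ((eta3 p - p) / (p - eta1 p))"

definition length_scale :: "real \<Rightarrow> real" where
  "length_scale p = 2 / sqrt (eta3 p * (p - eta1 p))"

definition half_period :: "real \<Rightarrow> real" where
  "half_period p = 2 * length_scale p * ellK (modulus p)"

definition profile :: "real \<Rightarrow> real \<Rightarrow> real" where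
  "profile p = bump_profile (eta3 p) (modulus p) (beta_coeff p) (length_scale p)"

lemma c_eq_eta: "c = (eta1 p + p + eta3 p) / 4"
  unfolding eta1_def eta3_def by (simp add: field_simps)

lemma sqrtA_0: "sqrtA 0 = 8 * sqrt \<omega>"
  unfolding sqrtA_def Apoly_def by (simp add: real_sqrt_mult)

lemma eta1_0: "eta1 0 = 2*c - 4 * sqrt \<omega>" and eta3_0: "eta3 0 = 2*c + 4 * sqrt \<omega>"
  unfolding eta1_def eta3_def sqrtA_0 by simp_all

lemma sqrtA_alpha0: "sqrtA (alpha0 \<omega> c) = Q"
  unfolding sqrtA_def Apoly_alpha0 using Q_pos by simp

lemma eta3_alpha0: "eta3 (alpha0 \<omega> c) = alpha0 \<omega> c"
  unfolding eta3_def sqrtA_alpha0 by (simp add: alpha0_eq field_simps)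

lemma alpha0_minus_eta1_alpha0: "alpha0 \<omega> c - eta1 (alpha0 \<omega> c) = Q"
  unfolding eta1_def sqrtA_alpha0 by (simp add: alpha0_eq field_simps)

lemma eta3_gt:
  assumes "0 < p" "p < alpha0 \<omega> c"
  shows "p < eta3 p"
proof -
  have "\<bar>3*p - 4*c\<bar> < sqrtA p"
    using real_sqrt_less_mono[OF sq_less_Apoly[OF assms]] unfolding sqrtA_def by simp
  then show ?thesis unfolding eta3_def by (simp add: abs_less_iff)
qed

context
  fixes p :: real
  assumes p: "0 < p" "p \<le> alpha0 \<omega> c"
begin

lemma sqrtA_sq: "(sqrtA p)\<^sup>2 = Apoly \<omega> c p"
  unfolding sqrtA_def by (intro real_sqrt_pow2 order.trans[OF zero_le_power2 sq_le_Apoly[OF p]])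

lemma eta3_ge: "p \<le> eta3 p"
proof -
  have "\<bar>3*p - 4*c\<bar> \<le> sqrtA p"
    using real_sqrt_le_mono[OF sq_le_Apoly[OF p]] unfolding sqrtA_def by simp
  then show ?thesis unfolding eta3_def by (simp add: abs_le_iff)
qed

lemma eta1_neg: "eta1 p < 0"
proof -
  have "\<bar>p - 2*c\<bar> < 4 * sqrt \<omega>"
    using p alpha0_less minus_2_sqrt_omega_less_c c_le_2_sqrt_omega by (auto simp: abs_less_iff)
  then have "\<bar>p - 2*c\<bar>\<^sup>2 < (4 * sqrt \<omega>)\<^sup>2" by (intro power_strict_mono) auto
  moreover have "(4 * sqrt \<omega>)\<^sup>2 = 16 * \<omega>" using omega_pos by (simp add: power_mult_distrib)
  ultimately have "(p - 2*c)\<^sup>2 < 16 * \<omega>" by (simp only: power2_abs)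
  then have "(4*c - p)\<^sup>2 < Apoly \<omega> c p"
    unfolding Apoly_def by (simp add: power2_eq_square algebra_simps)
  then have "\<bar>4*c - p\<bar> < sqrtA p"
    unfolding sqrtA_def using real_sqrt_less_mono real_sqrt_abs by metis
  then show ?thesis unfolding eta1_def by simp
qed

lemma eta3_pos: "eta3 p > 0"
  using eta3_ge p by simp

lemma eta_product_pos: "eta3 p * (p - eta1 p) > 0"
  using eta3_pos eta1_neg p by simp

lemma modulus_radicand_nonneg: "0 \<le> - eta1 p * (eta3 p - p) / (eta3 p * (p - eta1 p))"
  by (rule divide_nonneg_pos[OF mult_nonneg_nonneg eta_product_pos]) (use eta1_neg eta3_ge in auto)

lemma modulus_sq: "(modulus p)\<^sup>2 = - eta1 p * (eta3 p - p) / (eta3 p * (p - eta1 p))"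
  unfolding modulus_def using modulus_radicand_nonneg by (rule real_sqrt_pow2)

lemma modulus_nonneg: "0 \<le> modulus p"
  unfolding modulus_def using modulus_radicand_nonneg by simp

lemma modulus_less_1: "modulus p < 1"
proof -
  have "eta1 p * p < eta3 p * p" using p eta1_neg eta3_pos by (intro mult_strict_right_mono) auto
  then have "- eta1 p * (eta3 p - p) < eta3 p * (p - eta1 p)" by (simp add: algebra_simps)
  then have "- eta1 p * (eta3 p - p) / (eta3 p * (p - eta1 p)) < 1"
    by (subst divide_less_eq_1_pos[OF eta_product_pos])
  then show ?thesis unfolding modulus_def by simp
qed

lemma modulus_sq_less_1: "(modulus p)\<^sup>2 < 1"
  using modulus_nonneg modulus_less_1 by (simp add: abs_square_less_1)

lemma beta_coeff_sq: "(beta_coeff p)\<^sup>2 = (eta3 p - p) / (p - eta1 p)"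
  unfolding beta_coeff_def using eta3_ge eta1_neg p by simp

lemma length_scale_pos: "length_scale p > 0"
  unfolding length_scale_def using eta_product_pos by simp

lemma length_scale_sq: "(length_scale p)\<^sup>2 = 4 / (eta3 p * (p - eta1 p))"
  unfolding length_scale_def using eta_product_pos by (simp add: power_divide)

lemma omega_eq_eta: "\<omega> - c\<^sup>2/4 = - (eta1 p * p + eta1 p * eta3 p + p * eta3 p) / 16"
proof -
  have "- (eta1 p * p + eta1 p * eta3 p + p * eta3 p) / 16
      = - (p * (4*c - p) + ((4*c - p)\<^sup>2 - (sqrtA p)\<^sup>2) / 4) / 16"
    unfolding eta1_def eta3_def by (simp add: field_simps power2_eq_square)
  then show ?thesis unfolding sqrtA_sq Apoly_def by (simp add: field_simps power2_eq_square)
qed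

lemma profile_sq:
  "(profile p x)\<^sup>2 = eta3 p * (jacobi_dn (x / (2 * length_scale p)) (modulus p))\<^sup>2
      / (1 + (beta_coeff p)\<^sup>2 * (jacobi_sn (x / (2 * length_scale p)) (modulus p))\<^sup>2)"
  unfolding profile_def using bump_profile_sq eta3_pos by blast

end

lemma modulus_pos:
  assumes "0 < p" "p < alpha0 \<omega> c"
  shows "modulus p > 0"
proof -
  have p: "0 < p" "p \<le> alpha0 \<omega> c" using assms by auto
  have "0 < (- eta1 p) * (eta3 p - p)"
    by (rule mult_pos_pos) (use eta1_neg[OF p] eta3_gt[OF assms] in auto)
  then have "0 < - eta1 p * (eta3 p - p) / (eta3 p * (p - eta1 p))"
    using eta_product_pos[OF p] by (rule divide_pos_pos)
  then show ?thesis unfolding modulus_def by simp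
qed

lemma profile_single_bump:
  assumes "0 < p" "p < alpha0 \<omega> c"
  shows "single_bump_solution \<omega> c (half_period p) (profile p)"
proof -
  have p: "0 < p" "p \<le> alpha0 \<omega> c" using assms by auto
  have "ansatz_equations \<omega> c (eta3 p) (modulus p) (beta_coeff p) (length_scale p)"
    by (rule ansatz_equations_of_roots[OF _ _ modulus_sq[OF p] beta_coeff_sq[OF p]
          length_scale_sq[OF p] omega_eq_eta[OF p] c_eq_eta])
       (use eta3_pos[OF p] eta1_neg[OF p] p in auto)
  then show ?thesis
    unfolding profile_def half_period_def
    using modulus_sq_less_1[OF p] modulus_pos[OF assms] eta3_pos[OF p] length_scale_pos[OF p]
    by (intro bump_profile_single_bump) auto
qed

end

section \<open>The half period as a function of the parameter\<close>

lemma continuous_on_ellF_modulus: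
  assumes "0 \<le> \<phi>" and "\<forall>k\<in>U. \<forall>\<theta>\<in>{0..\<phi>}. k\<^sup>2 * (sin \<theta>)\<^sup>2 < 1"
  shows "continuous_on U (\<lambda>k. ellF \<phi> k)"
proof -
  have "\<forall>z\<in>U \<times> cbox 0 \<phi>. sqrt (1 - (fst z)\<^sup>2 * (sin (snd z))\<^sup>2) \<noteq> 0"
  proof
    fix z assume "z \<in> U \<times> cbox 0 \<phi>"
    then have "(fst z)\<^sup>2 * (sin (snd z))\<^sup>2 < 1" using assms(2) by (auto simp: cbox_interval)
    then show "sqrt (1 - (fst z)\<^sup>2 * (sin (snd z))\<^sup>2) \<noteq> 0" by simp
  qed
  then have "continuous_on (U \<times> cbox 0 \<phi>) (\<lambda>z. 1 / sqrt (1 - (fst z)\<^sup>2 * (sin (snd z))\<^sup>2))"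
    by (intro continuous_intros)
  then have "continuous_on (U \<times> cbox 0 \<phi>) (\<lambda>(k, \<theta>). 1 / sqrt (1 - k\<^sup>2 * (sin \<theta>)\<^sup>2))"
    by (simp add: case_prod_beta')
  then have "continuous_on U (\<lambda>k. integral (cbox 0 \<phi>) (\<lambda>\<theta>. 1 / sqrt (1 - k\<^sup>2 * (sin \<theta>)\<^sup>2)))"
    by (rule integral_continuous_on_param)
  then show ?thesis unfolding ellF_def using assms(1) by (simp add: cbox_interval)
qed

lemma continuous_on_ellK: "continuous_on {0..<1} ellK"
  unfolding ellK_def[abs_def]
  by (rule continuous_on_ellF_modulus) (auto intro!: modulus_sin_sq_less_1 simp: abs_square_less_1)

lemma tendsto_ellF_modulus_1:
  assumes "0 \<le> \<phi>" "\<phi> < pi/2" and "(k \<longlongrightarrow> 1) F" and "eventually (\<lambda>z. 0 \<le> k z \<and> k z < 1) F"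
  shows "((\<lambda>z. ellF \<phi> (k z)) \<longlongrightarrow> ellF \<phi> 1) F"
proof -
  have "continuous_on {0..1} (\<lambda>k. ellF \<phi> k)"
    using assms(1,2) by (intro continuous_on_ellF_modulus) (auto intro!: modulus_sin_sq_less_1
        simp: abs_square_le_1)
  then show ?thesis
    by (rule continuous_on_tendsto_compose[OF _ assms(3)])
       (use assms(4) in \<open>auto elim: eventually_mono\<close>)
qed

lemma ellK_0: "ellK 0 = pi/2"
  unfolding ellK_def ellF_def by simp

lemma ellK_ge_pi_half: "k\<^sup>2 < 1 \<Longrightarrow> pi/2 \<le> ellK k"
  unfolding ellK_def using ellF_ge_self[of k "pi/2"] by simp

lemma filterlim_ellK_at_left_1: "filterlim ellK at_top (at_left 1)"
  unfolding filterlim_at_top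
proof
  fix Z :: real
  define t where "t = tanh (max Z 0 + 1)"
  define \<phi> where "\<phi> = arcsin t"
  have t: "-1 < t" "0 \<le> t" "t < 1" unfolding t_def using tanh_real_bounds[of "max Z 0 + 1"] by auto
  from arcsin_lt_bounded[OF t(1,3)] have "\<phi> < pi/2" unfolding \<phi>_def by simp
  moreover have "0 \<le> \<phi>" unfolding \<phi>_def using arcsin_le_arcsin[of 0 t] t by simp
  ultimately have \<phi>: "0 \<le> \<phi>" "\<phi> < pi/2" by simp_all
  have ev01: "eventually (\<lambda>k. 0 \<le> k \<and> k < 1) (at_left (1::real))"
    by (rule eventually_at_leftI[of 0]) auto
  have "eventually (\<lambda>k. Z < ellF \<phi> k) (at_left 1)"
    using order_tendstoD(1)[OF tendsto_ellF_modulus_1[OF \<phi> tendsto_ident_at ev01]]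
    unfolding \<phi>_def t_def ellF_1_arcsin_tanh by simp
  then show "eventually (\<lambda>k. Z \<le> ellK k) (at_left 1)"
    using ev01
  proof eventually_elim
    case (elim k)
    then have "k\<^sup>2 < 1" by (simp add: abs_square_less_1)
    then have "ellF \<phi> k \<le> ellK k" unfolding ellK_def using ellF_le_iff \<phi> by simp
    then show ?case using elim by simp
  qed
qed

context soliton_parameters
begin

lemma eventually_parameter_range: "eventually (\<lambda>p. 0 < p \<and> p < alpha0 \<omega> c) (at_right 0)"
  by (rule eventually_at_rightI[where b="alpha0 \<omega> c"]) (use alpha0_pos in auto)

lemma continuous_eta [continuous_intros]:
  "continuous_on S eta1" "continuous_on S eta3"
  unfolding eta1_def[abs_def] eta3_def[abs_def] sqrtA_def Apoly_def
  by (auto intro!: continuous_intros)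

lemma tendsto_eta:
  assumes "(q \<longlongrightarrow> q0) F"
  shows "((\<lambda>z. eta1 (q z)) \<longlongrightarrow> eta1 q0) F" "((\<lambda>z. eta3 (q z)) \<longlongrightarrow> eta3 q0) F"
  unfolding eta1_def eta3_def sqrtA_def Apoly_def using assms by (auto intro!: tendsto_intros)

lemmas tendsto_eta_at_right_0 = tendsto_eta[OF tendsto_ident_at[of 0 "{0<..}"]]

lemma eta_0_hyperbolic:
  assumes "\<omega> > c\<^sup>2/4"
  shows "eta1 0 < 0" "eta3 0 > 0" "eta3 0 * (0 - eta1 0) = 4 * (4 * \<omega> - c\<^sup>2)"
proof -
  show "eta1 0 < 0" "eta3 0 > 0"
    unfolding eta1_0 eta3_0 using c_less_2_sqrt_omega[OF assms] minus_2_sqrt_omega_less_c by auto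
  show "eta3 0 * (0 - eta1 0) = 4 * (4 * \<omega> - c\<^sup>2)"
    unfolding eta1_0 eta3_0 using omega_pos by (simp add: algebra_simps power2_eq_square)
qed

lemma eta_0_algebraic:
  assumes "\<not> \<omega> > c\<^sup>2/4"
  shows "eta1 0 = 0" "eta3 0 = 4 * c" "c > 0"
proof -
  have "\<omega> = (c/2)\<^sup>2" "c > 0" using admissible assms by (auto simp: power_divide)
  then have "sqrt \<omega> = c/2" by simp
  then show "eta1 0 = 0" "eta3 0 = 4 * c" unfolding eta1_0 eta3_0 by simp_all
  show "c > 0" by fact
qed

lemma modulus_tendsto_1:
  assumes "\<omega> > c\<^sup>2/4"
  shows "(modulus \<longlongrightarrow> 1) (at_right 0)"
proof -
  note \<eta> = eta_0_hyperbolic[OF assms]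
  have "(modulus \<longlongrightarrow> sqrt (- eta1 0 * (eta3 0 - 0) / (eta3 0 * (0 - eta1 0)))) (at_right 0)"
    unfolding modulus_def[abs_def] using \<eta> assms
    by (intro tendsto_intros tendsto_eta_at_right_0 tendsto_ident_at) auto
  then show ?thesis using \<eta> by simp
qed

lemma length_scale_tendsto:
  assumes "\<omega> > c\<^sup>2/4"
  shows "(length_scale \<longlongrightarrow> 1 / sqrt (4 * \<omega> - c\<^sup>2)) (at_right 0)"
proof -
  note \<eta> = eta_0_hyperbolic[OF assms]
  have "(length_scale \<longlongrightarrow> 2 / sqrt (eta3 0 * (0 - eta1 0))) (at_right 0)"
    unfolding length_scale_def[abs_def] using \<eta> assms
    by (intro tendsto_intros tendsto_eta_at_right_0 tendsto_ident_at) auto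
  moreover have "sqrt (4 * (4 * \<omega> - c\<^sup>2)) = 2 * sqrt (4 * \<omega> - c\<^sup>2)"
    unfolding real_sqrt_mult by simp
  ultimately show ?thesis unfolding \<eta>(3) by simp
qed

lemma length_scale_tendsto_at_top:
  assumes "\<not> \<omega> > c\<^sup>2/4"
  shows "filterlim length_scale at_top (at_right 0)"
proof -
  have "((\<lambda>p. sqrt (eta3 p * (p - eta1 p))) \<longlongrightarrow> 0) (at_right 0)"
    using tendsto_real_sqrt[OF tendsto_mult[OF tendsto_eta_at_right_0(2)
          tendsto_diff[OF tendsto_ident_at tendsto_eta_at_right_0(1)]]]
    by (simp add: eta_0_algebraic[OF assms])
  moreover have "eventually (\<lambda>p. 0 < sqrt (eta3 p * (p - eta1 p))) (at_right 0)"
    using eventually_parameter_range by eventually_elim (simp add: eta_product_pos)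
  ultimately have "filterlim (\<lambda>p. sqrt (eta3 p * (p - eta1 p))) (at_right 0) (at_right 0)"
    unfolding filterlim_at by (auto elim: eventually_mono)
  from filterlim_compose[OF filterlim_inverse_at_top_right this]
  have inv: "filterlim (\<lambda>p. inverse (sqrt (eta3 p * (p - eta1 p)))) at_top (at_right 0)" .
  have "filterlim (\<lambda>p. 2 * inverse (sqrt (eta3 p * (p - eta1 p)))) at_top (at_right 0)"
    using filterlim_tendsto_pos_mult_at_top[OF tendsto_const[of 2] _ inv] by simp
  then show ?thesis unfolding length_scale_def[abs_def] by (simp add: divide_inverse)
qed

lemma continuous_on_half_period: "continuous_on {0<..alpha0 \<omega> c} half_period"
proof -
  let ?I = "{0<..alpha0 \<omega> c}"
  have "continuous_on ?I length_scale"
    unfolding length_scale_def[abs_def] using eta_product_pos eta3_pos eta1_neg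
    by (intro continuous_intros) force+
  moreover have "continuous_on ?I modulus"
    unfolding modulus_def[abs_def] using eta_product_pos eta3_pos eta1_neg
    by (intro continuous_intros) force+
  then have "continuous_on ?I (\<lambda>p. ellK (modulus p))"
    by (rule continuous_on_compose2[OF continuous_on_ellK]) (use modulus_nonneg modulus_less_1 in auto)
  ultimately show ?thesis unfolding half_period_def[abs_def] by (intro continuous_intros)
qed

lemma half_period_alpha0: "half_period (alpha0 \<omega> c) = L0 \<omega> c"
proof -
  have "modulus (alpha0 \<omega> c) = 0" unfolding modulus_def eta3_alpha0 by simp
  moreover have "eta3 (alpha0 \<omega> c) * (alpha0 \<omega> c - eta1 (alpha0 \<omega> c)) = alpha0 \<omega> c * Q"
    unfolding eta3_alpha0 alpha0_minus_eta1_alpha0 ..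
  moreover have "sqrt (Apoly \<omega> c (alpha0 \<omega> c)) = Q" unfolding Apoly_alpha0 using Q_pos by simp
  ultimately show ?thesis unfolding half_period_def length_scale_def L0_def by (simp add: ellK_0)
qed

lemma half_period_tendsto_at_top: "filterlim half_period at_top (at_right 0)"
proof (cases "\<omega> > c\<^sup>2/4")
  case True
  have "eventually (\<lambda>p. modulus p \<in> {..<1} \<and> modulus p \<noteq> 1) (at_right 0)"
    using eventually_parameter_range by eventually_elim (use modulus_less_1 in force)
  then have "filterlim modulus (at_left 1) (at_right 0)"
    unfolding filterlim_at using modulus_tendsto_1[OF True] by simp
  from filterlim_compose[OF filterlim_ellK_at_left_1 this]
  have "filterlim (\<lambda>p. ellK (modulus p)) at_top (at_right 0)" .
  moreover have "((\<lambda>p. 2 * length_scale p) \<longlongrightarrow> 2 * (1 / sqrt (4 * \<omega> - c\<^sup>2))) (at_right 0)"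
    by (intro tendsto_intros length_scale_tendsto[OF True])
  ultimately show ?thesis
    unfolding half_period_def[abs_def] using True
    by (intro filterlim_tendsto_pos_mult_at_top) auto
next
  case False
  have "filterlim (\<lambda>p. pi * length_scale p) at_top (at_right 0)"
    by (intro filterlim_tendsto_pos_mult_at_top[OF tendsto_const] length_scale_tendsto_at_top[OF False])
       simp
  moreover have "eventually (\<lambda>p. pi * length_scale p \<le> half_period p) (at_right 0)"
    using eventually_parameter_range
  proof eventually_elim
    case (elim p)
    then have "pi/2 \<le> ellK (modulus p)" "0 < length_scale p"
      using ellK_ge_pi_half modulus_sq_less_1 length_scale_pos by auto
    then show ?case unfolding half_period_def by (simp add: mult.commute mult_left_mono)
  qed
  ultimately show ?thesis by (rule filterlim_at_top_mono)
qed

lemma half_period_surj: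
  assumes "L > L0 \<omega> c"
  shows "\<exists>p. 0 < p \<and> p < alpha0 \<omega> c \<and> half_period p = L"
proof -
  have "eventually (\<lambda>p. L \<le> half_period p \<and> 0 < p \<and> p < alpha0 \<omega> c) (at_right 0)"
    using half_period_tendsto_at_top eventually_parameter_range
    unfolding filterlim_at_top by (auto elim: eventually_conj)
  then obtain p1 where p1: "L \<le> half_period p1" "0 < p1" "p1 < alpha0 \<omega> c"
    using eventually_happens[of _ "at_right (0::real)"] by auto
  have "continuous_on {p1..alpha0 \<omega> c} half_period"
    by (rule continuous_on_subset[OF continuous_on_half_period]) (use p1 in auto)
  then obtain p where "p1 \<le> p" "p \<le> alpha0 \<omega> c" "half_period p = L"
    using IVT2'[of half_period "alpha0 \<omega> c" L p1] p1 assms half_period_alpha0 by auto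
  moreover have "p \<noteq> alpha0 \<omega> c" using \<open>half_period p = L\<close> half_period_alpha0 assms by auto
  ultimately show ?thesis using p1 by (intro exI[of _ p]) auto
qed

definition parameter_of_period :: "real \<Rightarrow> real" where
  "parameter_of_period L = (SOME p. 0 < p \<and> p < alpha0 \<omega> c \<and> half_period p = L)"

lemma parameter_of_period:
  assumes "L > L0 \<omega> c"
  shows "0 < parameter_of_period L" "parameter_of_period L < alpha0 \<omega> c"
    "half_period (parameter_of_period L) = L"
  using someI_ex[OF half_period_surj[OF assms]] unfolding parameter_of_period_def by auto

text \<open>Large periods force small parameters, because \<open>half_period\<close> is bounded on every
  compact subinterval \<open>[\<delta>, \<alpha>\<^sub>0]\<close>.\<close>

lemma parameter_of_period_tendsto_0: "filterlim parameter_of_period (at_right 0) at_top"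
  unfolding filterlim_at
proof
  have evL: "eventually (\<lambda>L. L > L0 \<omega> c) at_top" by (rule eventually_gt_at_top)
  show "eventually (\<lambda>L. parameter_of_period L \<in> {0<..} \<and> parameter_of_period L \<noteq> 0) at_top"
    using evL by eventually_elim (use parameter_of_period in force)
  show "(parameter_of_period \<longlongrightarrow> 0) at_top"
  proof (rule order_tendstoI)
    fix a :: real assume "a < 0"
    show "eventually (\<lambda>L. a < parameter_of_period L) at_top"
      using evL by eventually_elim (use parameter_of_period \<open>a < 0\<close> in force)
  next
    fix a :: real assume "0 < a"
    define \<delta> where "\<delta> = min a (alpha0 \<omega> c)"
    have \<delta>: "0 < \<delta>" "\<delta> \<le> a" "\<delta> \<le> alpha0 \<omega> c" unfolding \<delta>_def using \<open>0 < a\<close> alpha0_pos by auto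
    have "continuous_on {\<delta>..alpha0 \<omega> c} half_period"
      by (rule continuous_on_subset[OF continuous_on_half_period]) (use \<delta> in auto)
    then obtain pmax where pmax: "\<forall>p\<in>{\<delta>..alpha0 \<omega> c}. half_period p \<le> half_period pmax"
      using continuous_attains_sup[OF compact_Icc] \<delta> by (metis atLeastAtMost_iff empty_iff)
    have "eventually (\<lambda>L. L > max (half_period pmax) (L0 \<omega> c)) at_top"
      by (rule eventually_gt_at_top)
    then show "eventually (\<lambda>L. parameter_of_period L < a) at_top"
    proof eventually_elim
      case (elim L)
      then have "\<not> parameter_of_period L \<in> {\<delta>..alpha0 \<omega> c}"
        using pmax parameter_of_period[of L] by fastforce
      then show ?case using parameter_of_period[of L] elim \<delta> by auto
    qed
  qed
qed

end

section \<open>Limits of the Jacobi amplitude\<close>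

lemma eventually_jacobi_am_less:
  assumes "((\<lambda>z. ellF b (k z)) \<longlongrightarrow> l) F" and "(t \<longlongrightarrow> t0) F" and "t0 < l"
    and "eventually (\<lambda>z. (k z)\<^sup>2 < 1) F"
  shows "eventually (\<lambda>z. jacobi_am (t z) (k z) < b) F"
proof -
  have m: "(t0 + l) / 2 < l" "t0 < (t0 + l) / 2" using assms(3) by simp_all
  from order_tendstoD(1)[OF assms(1) m(1)] order_tendstoD(2)[OF assms(2) m(2)] assms(4)
  show ?thesis
  proof eventually_elim
    case (elim z)
    then have "ellF (jacobi_am (t z) (k z)) (k z) < ellF b (k z)" by simp
    then show ?case using ellF_less_iff[OF elim(3)] by blast
  qed
qed

lemma eventually_less_jacobi_am:
  assumes "((\<lambda>z. ellF a (k z)) \<longlongrightarrow> l) F" and "(t \<longlongrightarrow> t0) F" and "l < t0"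
    and "eventually (\<lambda>z. (k z)\<^sup>2 < 1) F"
  shows "eventually (\<lambda>z. a < jacobi_am (t z) (k z)) F"
proof -
  have m: "l < (t0 + l) / 2" "(t0 + l) / 2 < t0" using assms(3) by simp_all
  from order_tendstoD(2)[OF assms(1) m(1)] order_tendstoD(1)[OF assms(2) m(2)] assms(4)
  show ?thesis
  proof eventually_elim
    case (elim z)
    then have "ellF a (k z) < ellF (jacobi_am (t z) (k z)) (k z)" by simp
    then show ?case using ellF_less_iff[OF elim(3)] by blast
  qed
qed

text \<open>As \<open>k \<rightarrow> 1\<close> the amplitude tends to the Gudermannian function \<open>arcsin \<circ> tanh\<close>,
  the inverse of \<open>ellF \<cdot> 1 = artanh \<circ> sin\<close>.\<close>

lemma tendsto_jacobi_am_modulus_1: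
  assumes t: "(t \<longlongrightarrow> t0) F" "t0 > 0"
    and k: "(k \<longlongrightarrow> 1) F" "eventually (\<lambda>z. 0 \<le> k z \<and> k z < 1) F"
  shows "((\<lambda>z. jacobi_am (t z) (k z)) \<longlongrightarrow> arcsin (tanh t0)) F"
proof -
  define \<phi>0 where "\<phi>0 = arcsin (tanh t0)"
  have b: "-1 < tanh t0" "0 < tanh t0" "tanh t0 < 1" using tanh_real_bounds[of t0] t(2) by auto
  from arcsin_lt_bounded[OF b(1,3)] have "\<phi>0 < pi/2" unfolding \<phi>0_def by simp
  moreover have "0 < \<phi>0" unfolding \<phi>0_def using arcsin_less_arcsin[of 0 "tanh t0"] b by simp
  ultimately have \<phi>0: "0 < \<phi>0" "\<phi>0 < pi/2" by simp_all
  have F\<phi>0: "ellF \<phi>0 1 = t0" unfolding \<phi>0_def by (rule ellF_1_arcsin_tanh)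
  have k2: "eventually (\<lambda>z. (k z)\<^sup>2 < 1) F"
    using k(2) by eventually_elim (simp add: abs_square_less_1)
  show ?thesis unfolding \<phi>0_def[symmetric]
  proof (rule order_tendstoI)
    fix b assume "\<phi>0 < b"
    define b' where "b' = min b ((\<phi>0 + pi/2) / 2)"
    have b': "\<phi>0 < b'" "b' < pi/2" "b' \<le> b"
      unfolding b'_def using \<open>\<phi>0 < b\<close> \<phi>0 by (simp_all add: min_def)
    have "t0 < ellF b' 1" using ellF_1_strict_mono[of \<phi>0 b'] \<phi>0 b' F\<phi>0 by simp
    then have "eventually (\<lambda>z. jacobi_am (t z) (k z) < b') F"
      using \<phi>0 b' by (intro eventually_jacobi_am_less[OF tendsto_ellF_modulus_1[OF _ _ k] t(1) _ k2]) auto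
    then show "eventually (\<lambda>z. jacobi_am (t z) (k z) < b) F"
      by eventually_elim (use b' in simp)
  next
    fix a assume "a < \<phi>0"
    define a' where "a' = max a 0"
    have a': "0 \<le> a'" "a' < \<phi>0" "a \<le> a'" unfolding a'_def using \<open>a < \<phi>0\<close> \<phi>0 by auto
    have "ellF a' 1 < t0" using ellF_1_strict_mono[of a' \<phi>0] a' \<phi>0 F\<phi>0 by simp
    then have "eventually (\<lambda>z. a' < jacobi_am (t z) (k z)) F"
      using a' \<phi>0 by (intro eventually_less_jacobi_am[OF tendsto_ellF_modulus_1[OF _ _ k] t(1) _ k2]) auto
    then show "eventually (\<lambda>z. a < jacobi_am (t z) (k z)) F"
      by eventually_elim (use a' in simp)
  qed
qed

lemma ellF_le_div_sqrt:
  assumes k2: "k\<^sup>2 < 1" and \<phi>: "0 \<le> \<phi>" "\<phi> < 1"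
  shows "ellF \<phi> k \<le> \<phi> / sqrt (1 - \<phi>\<^sup>2)"
proof -
  define C where "C = 1 / sqrt (1 - \<phi>\<^sup>2)"
  have "\<phi>\<^sup>2 < 1" using \<phi> by (simp add: abs_square_less_1)
  have "(\<lambda>x. x * C - ellF x k) 0 \<le> (\<lambda>x. x * C - ellF x k) \<phi>"
  proof (rule DERIV_nonneg_imp_nondecreasing[OF \<phi>(1)])
    fix x assume x: "0 \<le> x" "x \<le> \<phi>"
    have "0 \<le> sin x" "sin x \<le> x" using x \<phi> pi_gt3 by (auto intro!: sin_ge_zero sin_x_le_x)
    then have "(sin x)\<^sup>2 \<le> \<phi>\<^sup>2" using x by (meson order.trans power_mono)
    moreover have "k\<^sup>2 * (sin x)\<^sup>2 \<le> (sin x)\<^sup>2" using k2 by (simp add: mult_left_le_one_le)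
    ultimately have "1 - \<phi>\<^sup>2 \<le> (Delta k x)\<^sup>2"
      using Delta_sq[OF modulus_sin_sq_less_1] k2 by auto
    then have "sqrt (1 - \<phi>\<^sup>2) \<le> Delta k x"
      using Delta_pos[OF k2, of x] real_sqrt_le_mono by fastforce
    then have "1 / Delta k x \<le> C"
      unfolding C_def using \<open>\<phi>\<^sup>2 < 1\<close> Delta_pos[OF k2, of x] by (intro divide_left_mono) auto
    then show "\<exists>y. ((\<lambda>x. x * C - ellF x k) has_real_derivative y) (at x) \<and> 0 \<le> y"
      by (intro exI[of _ "1 * C - 1 / Delta k x"])
         (auto intro!: derivative_eq_intros DERIV_ellF[OF k2])
  qed
  then show ?thesis unfolding C_def by simp
qed

lemma jacobi_am_bounds:
  assumes k2: "k\<^sup>2 < 1" and t: "0 < t" "t < 1"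
  shows "t * sqrt (1 - t\<^sup>2) \<le> jacobi_am t k" "jacobi_am t k \<le> t" "0 < jacobi_am t k"
proof -
  let ?\<phi> = "jacobi_am t k"
  show pos: "0 < ?\<phi>" using jacobi_am_less_iff[OF k2, of 0 t] jacobi_am_0[OF k2] t by simp
  show le: "?\<phi> \<le> t" using ellF_ge_self[OF k2, of ?\<phi>] ellF_jacobi_am[OF k2] pos by simp
  have "t \<le> ?\<phi> / sqrt (1 - ?\<phi>\<^sup>2)"
    using ellF_le_div_sqrt[OF k2, of ?\<phi>] ellF_jacobi_am[OF k2] pos le t by simp
  moreover have "sqrt (1 - ?\<phi>\<^sup>2) > 0" using le t pos by (simp add: abs_square_less_1)
  ultimately have "t * sqrt (1 - ?\<phi>\<^sup>2) \<le> ?\<phi>" by (simp add: le_divide_eq)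
  moreover have "sqrt (1 - t\<^sup>2) \<le> sqrt (1 - ?\<phi>\<^sup>2)"
    using le pos by (intro real_sqrt_le_mono) (simp add: power_mono)
  ultimately show "t * sqrt (1 - t\<^sup>2) \<le> ?\<phi>"
    using t by (meson mult_left_mono order.trans less_imp_le)
qed

lemma tendsto_sin_over_self: "((\<lambda>y. sin y / y) \<longlongrightarrow> 1) (at (0::real))"
  using DERIV_sin[of 0] by (simp add: has_field_derivative_iff)

lemma tendsto_sin_jacobi_am_sq_ratio:
  assumes t: "(t \<longlongrightarrow> 0) F" "eventually (\<lambda>z. 0 < t z) F"
    and k2: "eventually (\<lambda>z. (k z)\<^sup>2 < 1) F"
  shows "((\<lambda>z. (sin (jacobi_am (t z) (k z)))\<^sup>2 / (t z)\<^sup>2) \<longlongrightarrow> 1) F"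
proof -
  let ?\<phi> = "\<lambda>z. jacobi_am (t z) (k z)"
  have B: "eventually (\<lambda>z. t z * sqrt (1 - (t z)\<^sup>2) \<le> ?\<phi> z \<and> ?\<phi> z \<le> t z \<and> 0 < ?\<phi> z) F"
    using k2 t(2) order_tendstoD(2)[OF t(1) zero_less_one]
    by eventually_elim (simp add: jacobi_am_bounds)
  have ratio: "((\<lambda>z. ?\<phi> z / t z) \<longlongrightarrow> 1) F"
  proof (rule real_tendsto_sandwich[where f="\<lambda>z. sqrt (1 - (t z)\<^sup>2)" and h="\<lambda>z. 1"])
    show "eventually (\<lambda>z. sqrt (1 - (t z)\<^sup>2) \<le> ?\<phi> z / t z) F"
      using B t(2) by eventually_elim (simp add: le_divide_eq mult.commute)
    show "eventually (\<lambda>z. ?\<phi> z / t z \<le> 1) F"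
      using B t(2) by eventually_elim simp
    show "((\<lambda>z. sqrt (1 - (t z)\<^sup>2)) \<longlongrightarrow> 1) F"
      using tendsto_real_sqrt[OF tendsto_diff[OF tendsto_const tendsto_power[OF t(1), of 2]], of 1]
      by simp
  qed simp
  have "(?\<phi> \<longlongrightarrow> 0) F"
    by (rule real_tendsto_sandwich[where f="\<lambda>z. 0" and h=t]) (use B t(1) in \<open>auto elim: eventually_mono\<close>)
  then have "filterlim ?\<phi> (at 0) F"
    unfolding filterlim_at using B by (auto elim: eventually_mono)
  from filterlim_compose[OF tendsto_sin_over_self this]
  have "((\<lambda>z. ((sin (?\<phi> z) / ?\<phi> z) * (?\<phi> z / t z))\<^sup>2) \<longlongrightarrow> (1 * 1)\<^sup>2) F"
    by (intro tendsto_intros ratio)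
  then have "((\<lambda>z. ((sin (?\<phi> z) / ?\<phi> z) * (?\<phi> z / t z))\<^sup>2) \<longlongrightarrow> 1) F" by simp
  then show ?thesis
    by (rule Lim_transform_eventually) (use B in \<open>auto elim!: eventually_mono simp: power_divide\<close>)
qed

section \<open>Convergence to the soliton\<close>

lemma tendsto_sin_sq_profile:
  assumes "(\<eta> \<longlongrightarrow> \<eta>0) F" and "((\<lambda>z. (k z)\<^sup>2 * S z) \<longlongrightarrow> A) F"
    and "((\<lambda>z. (\<beta> z)\<^sup>2 * S z) \<longlongrightarrow> B) F" and "0 \<le> B"
  shows "((\<lambda>z. sin_sq_profile (\<eta> z) (k z) (\<beta> z) (S z)) \<longlongrightarrow> sqrt \<eta>0 * sqrt ((1 - A) / (1 + B))) F"
  unfolding sin_sq_profile_def using assms by (intro tendsto_intros) auto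

lemma soliton_tanh_identity:
  fixes r c s :: real
  assumes r: "r > 0" "c < 2 * r"
  shows "(2*c + 4*r) * ((1 - s\<^sup>2 / (1 + s\<^sup>2)) / (1 + (2*c + 4*r) / (4*r - 2*c) * (s\<^sup>2 / (1 + s\<^sup>2))))
       = (4 * r\<^sup>2 - c\<^sup>2) / (r * ((1 + 2 * s\<^sup>2) - c / (2*r)))"
proof -
  define D where "D = 8 * r * s\<^sup>2 + 4 * r - 2 * c"
  have pos: "1 + s\<^sup>2 > 0" "4 * r - 2 * c > 0" by (simp_all add: add_pos_nonneg r)
  moreover have "8 * r * s\<^sup>2 \<ge> 0" using r by simp
  ultimately have D: "D > 0" unfolding D_def by linarith
  have "1 - s\<^sup>2 / (1 + s\<^sup>2) = 1 / (1 + s\<^sup>2)"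
    using pos by (simp add: field_simps)
  moreover have "1 + (2*c + 4*r) / (4*r - 2*c) * (s\<^sup>2 / (1 + s\<^sup>2)) = D / ((4*r - 2*c) * (1 + s\<^sup>2))"
  proof -
    define a where "a = 4*r - 2*c"
    define b where "b = 1 + s\<^sup>2"
    have "a \<noteq> 0" "b \<noteq> 0" using pos unfolding a_def b_def by simp_all
    then have "1 + (2*c + 4*r) / a * (s\<^sup>2 / b) = (a * b + (2*c + 4*r) * s\<^sup>2) / (a * b)"
      by (simp add: field_simps)
    also have "a * b + (2*c + 4*r) * s\<^sup>2 = D"
      unfolding a_def b_def D_def by (simp add: algebra_simps)
    finally show ?thesis unfolding a_def b_def .
  qed
  ultimately have q: "(1 - s\<^sup>2 / (1 + s\<^sup>2)) / (1 + (2*c + 4*r) / (4*r - 2*c) * (s\<^sup>2 / (1 + s\<^sup>2)))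
      = (4*r - 2*c) / D"
    using pos D by simp
  have den: "r * ((1 + 2 * s\<^sup>2) - c / (2*r)) = D / 4"
    using r unfolding D_def by (simp add: field_simps)
  have "(2*c + 4*r) * ((4*r - 2*c) / D) = (2*c + 4*r) * (4*r - 2*c) / D" by simp
  also have "\<dots> = (4 * r\<^sup>2 - c\<^sup>2) / (D / 4)" by (simp add: algebra_simps power2_eq_square)
  finally show ?thesis unfolding q den .
qed

lemma soliton_minus: "soliton \<omega> c (- x) = soliton \<omega> c x"
  unfolding soliton_def by simp

lemma soliton_tanh_form:
  fixes \<omega> c x :: real
  assumes "\<omega> > c\<^sup>2/4"
  defines "r \<equiv> sqrt \<omega>" and "T \<equiv> (tanh (sqrt (4 * \<omega> - c\<^sup>2) * x / 2))\<^sup>2"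
  shows "soliton \<omega> c x = sqrt (2*c + 4*r) * sqrt ((1 - T) / (1 + (2*c + 4*r) / (4*r - 2*c) * T))"
proof -
  define t where "t = sqrt (4 * \<omega> - c\<^sup>2) * x / 2"
  have "\<omega> > 0" using assms(1) zero_le_power2[of c] by linarith
  moreover have "sqrt (c\<^sup>2) < sqrt (4 * \<omega>)" using assms(1) by (intro real_sqrt_less_mono) simp
  ultimately have r: "r > 0" "c < 2 * r" "r\<^sup>2 = \<omega>" unfolding r_def by (auto simp: real_sqrt_mult)
  have T: "T = (sinh t)\<^sup>2 / (1 + (sinh t)\<^sup>2)"
    unfolding T_def t_def[symmetric] tanh_def by (simp add: power_divide cosh_square_eq add.commute)
  have "cosh (sqrt (4 * \<omega> - c\<^sup>2) * x) = 1 + 2 * (sinh t)\<^sup>2"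
    using cosh_double[of t] unfolding t_def by (simp add: cosh_square_eq)
  then have "soliton \<omega> c x = sqrt ((4 * r\<^sup>2 - c\<^sup>2) / (r * ((1 + 2 * (sinh t)\<^sup>2) - c / (2*r))))"
    unfolding soliton_def r_def using assms(1) \<open>\<omega> > 0\<close> by simp
  also have "\<dots> = sqrt ((2*c + 4*r) * ((1 - T) / (1 + (2*c + 4*r) / (4*r - 2*c) * T)))"
    unfolding T soliton_tanh_identity[OF r(1,2)] ..
  finally show ?thesis by (simp only: real_sqrt_mult)
qed

context soliton_parameters
begin

lemma profile_eq_sin_sq_profile:
  "profile p x = sin_sq_profile (eta3 p) (modulus p) (beta_coeff p)
     ((sin (jacobi_am (x / (2 * length_scale p)) (modulus p)))\<^sup>2)"
  unfolding profile_def bump_profile_eq_sin_sq_profile ..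

lemma eventually_modulus_range: "eventually (\<lambda>p. 0 \<le> modulus p \<and> modulus p < 1) (at_right 0)"
  using eventually_parameter_range by eventually_elim (simp add: modulus_nonneg modulus_less_1)

lemma beta_coeff_sq_tendsto:
  assumes "\<omega> > c\<^sup>2/4"
  shows "((\<lambda>p. (beta_coeff p)\<^sup>2) \<longlongrightarrow> eta3 0 / (0 - eta1 0)) (at_right 0)"
proof -
  have "((\<lambda>p. (eta3 p - p) / (p - eta1 p)) \<longlongrightarrow> (eta3 0 - 0) / (0 - eta1 0)) (at_right 0)"
    using eta_0_hyperbolic[OF assms]
    by (intro tendsto_intros tendsto_eta_at_right_0 tendsto_ident_at) auto
  then have "((\<lambda>p. (eta3 p - p) / (p - eta1 p)) \<longlongrightarrow> eta3 0 / (0 - eta1 0)) (at_right 0)" by simp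
  then show ?thesis
    by (rule Lim_transform_eventually)
       (use eventually_parameter_range in \<open>auto elim!: eventually_mono simp: beta_coeff_sq\<close>)
qed

lemma profile_tendsto_soliton_hyperbolic:
  assumes hyp: "\<omega> > c\<^sup>2/4" and x: "x > 0"
  shows "((\<lambda>p. profile p x) \<longlongrightarrow> soliton \<omega> c x) (at_right 0)"
proof -
  define t0 where "t0 = sqrt (4 * \<omega> - c\<^sup>2) * x / 2"
  define T where "T = (tanh t0)\<^sup>2"
  let ?S = "\<lambda>p. (sin (jacobi_am (x / (2 * length_scale p)) (modulus p)))\<^sup>2"
  have "t0 > 0" unfolding t0_def using hyp x by simp
  have "((\<lambda>p. x / (2 * length_scale p)) \<longlongrightarrow> x / (2 * (1 / sqrt (4 * \<omega> - c\<^sup>2)))) (at_right 0)"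
    using hyp by (intro tendsto_intros length_scale_tendsto) auto
  then have "((\<lambda>p. x / (2 * length_scale p)) \<longlongrightarrow> t0) (at_right 0)"
    by (simp add: t0_def algebra_simps)
  from tendsto_jacobi_am_modulus_1[OF this \<open>t0 > 0\<close> modulus_tendsto_1[OF hyp] eventually_modulus_range]
  have "(?S \<longlongrightarrow> T) (at_right 0)"
    unfolding T_def using tanh_real_bounds[of t0] by (auto intro!: tendsto_eq_intros)
  moreover have "0 \<le> eta3 0 / (0 - eta1 0) * T"
    unfolding T_def using eta_0_hyperbolic[OF hyp]
    by (intro mult_nonneg_nonneg divide_nonneg_pos) auto
  ultimately have "((\<lambda>p. profile p x) \<longlongrightarrow>
      sqrt (eta3 0) * sqrt ((1 - 1\<^sup>2 * T) / (1 + eta3 0 / (0 - eta1 0) * T))) (at_right 0)"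
    unfolding profile_eq_sin_sq_profile
    by (intro tendsto_sin_sq_profile tendsto_intros tendsto_eta_at_right_0 modulus_tendsto_1[OF hyp]
        beta_coeff_sq_tendsto[OF hyp])
  also have "sqrt (eta3 0) * sqrt ((1 - 1\<^sup>2 * T) / (1 + eta3 0 / (0 - eta1 0) * T)) = soliton \<omega> c x"
    unfolding soliton_tanh_form[OF hyp] T_def t0_def eta3_0 eta1_0 by (simp add: algebra_simps)
  finally show ?thesis .
qed

lemma scaled_argument_tendsto_0:
  assumes "\<not> \<omega> > c\<^sup>2/4"
  shows "((\<lambda>p. x / (2 * length_scale p)) \<longlongrightarrow> 0) (at_right 0)"
proof -
  have "filterlim (\<lambda>p. 2 * length_scale p) at_top (at_right 0)"
    by (rule filterlim_tendsto_pos_mult_at_top[OF tendsto_const _ length_scale_tendsto_at_top[OF assms]])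
       simp
  then show ?thesis by (rule tendsto_divide_0[OF tendsto_const filterlim_at_top_imp_at_infinity])
qed

text \<open>For \<open>\<omega> = c\<^sup>2/4\<close> the factor \<open>p - \<eta>\<^sub>1(p) \<rightarrow> 0\<close> cancels between \<open>\<beta>\<^sup>2\<close> and \<open>1/g\<^sup>2\<close>.\<close>

lemma beta_coeff_sq_scaled_tendsto:
  assumes "\<not> \<omega> > c\<^sup>2/4"
  shows "((\<lambda>p. (beta_coeff p)\<^sup>2 * (x / (2 * length_scale p))\<^sup>2) \<longlongrightarrow> c\<^sup>2 * x\<^sup>2) (at_right 0)"
proof -
  note \<eta> = eta_0_algebraic[OF assms]
  have "((\<lambda>p. (eta3 p - p) * eta3 p * x\<^sup>2 / 16) \<longlongrightarrow> (4*c - 0) * (4*c) * x\<^sup>2 / 16) (at_right 0)"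
    unfolding \<eta>(2)[symmetric] by (intro tendsto_intros tendsto_eta_at_right_0 tendsto_ident_at) simp
  moreover have "(4*c - 0) * (4*c) * x\<^sup>2 / 16 = c\<^sup>2 * x\<^sup>2" by (simp add: power2_eq_square)
  ultimately have "((\<lambda>p. (eta3 p - p) * eta3 p * x\<^sup>2 / 16) \<longlongrightarrow> c\<^sup>2 * x\<^sup>2) (at_right 0)"
    by (simp only:)
  moreover have "eventually (\<lambda>p. (eta3 p - p) * eta3 p * x\<^sup>2 / 16
      = (beta_coeff p)\<^sup>2 * (x / (2 * length_scale p))\<^sup>2) (at_right 0)"
    using eventually_parameter_range
  proof eventually_elim
    case (elim p)
    then have p: "0 < p" "p \<le> alpha0 \<omega> c" by auto
    have "(beta_coeff p)\<^sup>2 * (x / (2 * length_scale p))\<^sup>2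
        = (eta3 p - p) / (p - eta1 p) * (x\<^sup>2 / (4 * (length_scale p)\<^sup>2))"
      unfolding beta_coeff_sq[OF p] by (simp add: power_divide power_mult_distrib)
    also have "\<dots> = (eta3 p - p) * eta3 p * x\<^sup>2 / 16"
      unfolding length_scale_sq[OF p] using eta1_neg[OF p] eta3_pos[OF p] p by (simp add: field_simps)
    finally show ?case by simp
  qed
  ultimately show ?thesis by (rule Lim_transform_eventually)
qed

lemma profile_tendsto_soliton_algebraic:
  assumes alg: "\<not> \<omega> > c\<^sup>2/4" and x: "x > 0"
  shows "((\<lambda>p. profile p x) \<longlongrightarrow> soliton \<omega> c x) (at_right 0)"
proof -
  let ?F = "at_right (0::real)"
  let ?t = "\<lambda>p. x / (2 * length_scale p)"
  let ?S = "\<lambda>p. (sin (jacobi_am (?t p) (modulus p)))\<^sup>2"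
  note \<eta> = eta_0_algebraic[OF alg]
  have t_pos: "eventually (\<lambda>p. 0 < ?t p) ?F"
    using eventually_parameter_range by eventually_elim (use x length_scale_pos in simp)
  have k2: "eventually (\<lambda>p. (modulus p)\<^sup>2 < 1) ?F"
    using eventually_parameter_range by eventually_elim (simp add: modulus_sq_less_1)
  have ratio: "((\<lambda>p. ?S p / (?t p)\<^sup>2) \<longlongrightarrow> 1) ?F"
    by (rule tendsto_sin_jacobi_am_sq_ratio[OF scaled_argument_tendsto_0[OF alg] t_pos k2])
  have "((\<lambda>p. ?S p / (?t p)\<^sup>2 * (?t p)\<^sup>2) \<longlongrightarrow> 1 * 0\<^sup>2) ?F"
    by (intro tendsto_intros ratio scaled_argument_tendsto_0[OF alg])
  then have "((\<lambda>p. ?S p / (?t p)\<^sup>2 * (?t p)\<^sup>2) \<longlongrightarrow> 0) ?F" by simp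
  then have S: "(?S \<longlongrightarrow> 0) ?F"
    by (rule Lim_transform_eventually) (use t_pos in \<open>auto elim!: eventually_mono\<close>)
  have kS: "((\<lambda>p. (modulus p)\<^sup>2 * ?S p) \<longlongrightarrow> 0) ?F"
    by (rule real_tendsto_sandwich[where f="\<lambda>p. 0" and h="?S"])
       (use k2 S in \<open>auto elim!: eventually_mono intro: mult_left_le_one_le\<close>)
  have "((\<lambda>p. (beta_coeff p)\<^sup>2 * (?t p)\<^sup>2 * (?S p / (?t p)\<^sup>2)) \<longlongrightarrow> c\<^sup>2 * x\<^sup>2 * 1) ?F"
    by (intro tendsto_intros ratio beta_coeff_sq_scaled_tendsto[OF alg])
  then have bS: "((\<lambda>p. (beta_coeff p)\<^sup>2 * ?S p) \<longlongrightarrow> c\<^sup>2 * x\<^sup>2) ?F"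
    unfolding mult_1_right
    by (rule Lim_transform_eventually) (use t_pos in \<open>auto elim!: eventually_mono\<close>)
  have "((\<lambda>p. profile p x) \<longlongrightarrow> sqrt (4*c) * sqrt ((1 - 0) / (1 + c\<^sup>2 * x\<^sup>2))) ?F"
    unfolding profile_eq_sin_sq_profile \<eta>(2)[symmetric]
    by (intro tendsto_sin_sq_profile tendsto_eta_at_right_0 kS bS) simp
  also have "sqrt (4*c) * sqrt ((1 - 0) / (1 + c\<^sup>2 * x\<^sup>2)) = soliton \<omega> c x"
    unfolding soliton_def using alg \<eta>(3)
    by (simp add: real_sqrt_mult[symmetric] power_mult_distrib add.commute)
  finally show ?thesis .
qed

lemma soliton_0: "soliton \<omega> c 0 = sqrt (eta3 0)"
proof (cases "\<omega> > c\<^sup>2/4")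
  case True
  have r: "sqrt \<omega> > 0" "(sqrt \<omega>)\<^sup>2 = \<omega>" "c < 2 * sqrt \<omega>"
    using omega_pos c_less_2_sqrt_omega[OF True] by auto
  then have "(4 * \<omega> - c\<^sup>2) / (sqrt \<omega> * (1 - c / (2 * sqrt \<omega>))) = 2*c + 4 * sqrt \<omega>"
    by (simp add: field_simps power2_eq_square)
  then show ?thesis unfolding soliton_def eta3_0 using True by simp
qed (simp add: soliton_def eta_0_algebraic)

lemma profile_0: "0 < p \<Longrightarrow> p \<le> alpha0 \<omega> c \<Longrightarrow> profile p 0 = sqrt (eta3 p)"
  unfolding profile_eq_sin_sq_profile sin_sq_profile_def
  using jacobi_am_0[OF modulus_sq_less_1] by simp

lemma profile_minus: "0 < p \<Longrightarrow> p \<le> alpha0 \<omega> c \<Longrightarrow> profile p (- x) = profile p x"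
  unfolding profile_eq_sin_sq_profile using jacobi_am_minus[OF modulus_sq_less_1]
  by (simp add: minus_divide_left[symmetric])

lemma profile_tendsto_soliton: "((\<lambda>p. profile p x) \<longlongrightarrow> soliton \<omega> c x) (at_right 0)"
proof -
  have pos: "((\<lambda>p. profile p y) \<longlongrightarrow> soliton \<omega> c y) (at_right 0)" if "y > 0" for y
    using profile_tendsto_soliton_hyperbolic profile_tendsto_soliton_algebraic that by blast
  consider "x > 0" | "x = 0" | "x < 0" by linarith
  then show ?thesis
  proof cases
    case 2
    have "((\<lambda>p. sqrt (eta3 p)) \<longlongrightarrow> soliton \<omega> c x) (at_right 0)"
      unfolding 2 soliton_0 by (intro tendsto_intros tendsto_eta_at_right_0)
    then show ?thesis
      by (rule Lim_transform_eventually)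
         (use eventually_parameter_range 2 in \<open>auto elim!: eventually_mono simp: profile_0\<close>)
  next
    case 3
    have "((\<lambda>p. profile p (- x)) \<longlongrightarrow> soliton \<omega> c x) (at_right 0)"
      using pos[of "- x"] 3 soliton_minus[of \<omega> c x] by simp
    then show ?thesis
      by (rule Lim_transform_eventually)
         (use eventually_parameter_range in \<open>auto elim!: eventually_mono simp: profile_minus\<close>)
  qed (rule pos)
qed

definition periodic_solution :: "real \<Rightarrow> real \<Rightarrow> real" where
  "periodic_solution L = profile (parameter_of_period L)"

lemma periodic_solution_single_bump:
  "L > L0 \<omega> c \<Longrightarrow> single_bump_solution \<omega> c L (periodic_solution L)"
  using profile_single_bump parameter_of_period unfolding periodic_solution_def by metis

lemma periodic_solution_sq:
  assumes "L > L0 \<omega> c"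
  shows "\<exists>\<eta>3 g k \<beta>. \<eta>3 > 0 \<and> g > 0 \<and> 0 < k \<and> k < 1 \<and>
           (\<forall>x. (periodic_solution L x)\<^sup>2 =
              \<eta>3 * (jacobi_dn (x / (2 * g)) k)\<^sup>2 / (1 + \<beta>\<^sup>2 * (jacobi_sn (x / (2 * g)) k)\<^sup>2))"
proof -
  let ?p = "parameter_of_period L"
  have p: "0 < ?p" "?p \<le> alpha0 \<omega> c" "?p < alpha0 \<omega> c" using parameter_of_period[OF assms] by auto
  show ?thesis
    unfolding periodic_solution_def
    using eta3_pos[OF p(1,2)] length_scale_pos[OF p(1,2)] modulus_pos[OF p(1,3)]
      modulus_less_1[OF p(1,2)] profile_sq[OF p(1,2)]
    by blast
qed

lemma periodic_solution_tendsto_soliton: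
  "((\<lambda>L. periodic_solution L x) \<longlongrightarrow> soliton \<omega> c x) at_top"
  unfolding periodic_solution_def
  using filterlim_compose[OF profile_tendsto_soliton parameter_of_period_tendsto_0] by simp

end

theorem theorem1p1:
  fixes \<omega> c :: real
  assumes "\<omega> > c\<^sup>2 / 4 \<or> (\<omega> = c\<^sup>2 / 4 \<and> c > 0)"
  shows "\<exists>\<Phi>L :: real \<Rightarrow> real \<Rightarrow> real.
           (\<forall>L > L0 \<omega> c.
              single_bump_solution \<omega> c L (\<Phi>L L) \<and>
              (\<exists>\<eta>3 g k \<beta>. \<eta>3 > 0 \<and> g > 0 \<and> 0 < k \<and> k < 1 \<and>
                 (\<forall>x \<in> {-L..L}. (\<Phi>L L x)\<^sup>2 =
                    \<eta>3 * (jacobi_dn (x / (2 * g)) k)\<^sup>2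
                       / (1 + \<beta>\<^sup>2 * (jacobi_sn (x / (2 * g)) k)\<^sup>2)))) \<and>
           (\<forall>x. ((\<lambda>L. \<Phi>L L x) \<longlongrightarrow> soliton \<omega> c x) at_top)"
proof -
  interpret soliton_parameters \<omega> c by unfold_locales (rule assms)
  have "single_bump_solution \<omega> c L (periodic_solution L) \<and>
      (\<exists>\<eta>3 g k \<beta>. \<eta>3 > 0 \<and> g > 0 \<and> 0 < k \<and> k < 1 \<and>
         (\<forall>x \<in> {-L..L}. (periodic_solution L x)\<^sup>2 =
            \<eta>3 * (jacobi_dn (x / (2 * g)) k)\<^sup>2 / (1 + \<beta>\<^sup>2 * (jacobi_sn (x / (2 * g)) k)\<^sup>2)))"
    if "L > L0 \<omega> c" for L
    using periodic_solution_single_bump[OF that] periodic_solution_sq[OF that] by blast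
  then show ?thesis using periodic_solution_tendsto_soliton by blast
qed

end
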